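(* Let $n\ge 2$, $q\in\left(2,\frac{2n}{n-1}\right)$, and let $\lambda_1=\frac{4(n+1)}{q-2}$. Let $s\mapsto (w(s),\lambda(s))$, defined for $s$ near $0$, be the curve of nontrivial solutions of $S(w,\lambda)=0$ bifurcating from $(0,\lambda_1)$, written as $w(s)=s\varphi_1+\beta_1(s)$ with $\lambda(0)=\lambda_1$, $\beta_1(0)=0=\beta_1'(0)$. Then $\lambda'(0)\neq 0$.
   Context: $\mathbb{C}\mathbf{P}^n$ carries the Fubini–Study metric $g_{FS}$ normalized so that the eigenvalues of $-\Delta_{g_{FS}}$ are $4k(k+n)$, $k\ge0$. $U(n)$ acts on $\mathbb{C}\mathbf{P}^n$ by $A\cdot[z_0:z_1:\dots:z_n]=[z_0:A(z_1,\dots,z_n)]$, with quotient map $f:\mathbb{C}\mathbf{P}^n\to[0,\pi/2]$ the distance to $[1:0:\dots:0]$. $X_I$ denotes the $U(n)$-invariant functions, $C^{k,\alpha}(X_I)=X_I\cap C^{k,\alpha}(\mathbb{C}\mathbf{P}^n)$, and $S:C^{2,\alpha}(X_I)\times\mathbb{R}_{\ge0}\to C^{0,\alpha}(X_I)$ is $S(w,\lambda)=-\Delta_{g_{FS}}w+\lambda\big(w+1-(w+1)^{q-1}\big)$ (so $u=w+1$ solves $-\Delta u+\lambda u=\lambda u^{q-1}$). Here $\varphi_1=\left(\frac{n+1}{n}\cos^2 r-\frac1n\right)\circ f$ spans the kernel of the linearization $v\mapsto -\Delta_{g_{FS}}v-\lambda_1(q-2)v$ on $C^{2,\alpha}(X_I)$,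 and $(w(s),\lambda(s))$ is the (differentiable) Crandall–Rabinowitz curve of nontrivial solutions through $(0,\lambda_1)$, with $\beta_1(s)$ in a complement of $\mathrm{span}(\varphi_1)$. *)

theory Defs
  imports "HOL-Analysis.Analysis"
begin

text \<open>Model of CP^n: functions on CP^n are represented by their lifts to the unit sphere
  S^{2n+1} in complex^'k (CARD('k) = n+1) under the Hopf map.  Smoothness, Hoelder norms and the
  Fubini-Study Laplacian are computed through the degree-0 homogeneous extension to R^{2n+2}.\<close>

definition sph_ext :: "('a::real_normed_vector \<Rightarrow> real) \<Rightarrow> 'a \<Rightarrow> real" where
  "sph_ext u = (\<lambda>x. u (x /\<^sub>R norm x))"

definition dderiv :: "'a::real_normed_vector \<Rightarrow> ('a \<Rightarrow> real) \<Rightarrow> 'a \<Rightarrow> real" where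
  "dderiv b g x = deriv (\<lambda>t. g (x + t *\<^sub>R b)) 0"

definition C2_on :: "('a::euclidean_space \<Rightarrow> real) \<Rightarrow> 'a set \<Rightarrow> bool" where
  "C2_on g U \<longleftrightarrow> continuous_on U g \<and>
     (\<forall>b\<in>Basis. (\<forall>x\<in>U. (\<lambda>t. g (x + t *\<^sub>R b)) field_differentiable (at 0)) \<and>
        continuous_on U (dderiv b g) \<and>
        (\<forall>c\<in>Basis. (\<forall>x\<in>U. (\<lambda>t. dderiv b g (x + t *\<^sub>R c)) field_differentiable (at 0)) \<and>
           continuous_on U (dderiv c (dderiv b g))))"

definition holder_quots :: "real \<Rightarrow> 'a::metric_space set \<Rightarrow> ('a \<Rightarrow> real) \<Rightarrow> real set" where
  "holder_quots \<alpha> K h = {\<bar>h x - h y\<bar> / (dist x y powr \<alpha>) | x y. x \<in> K \<and> y \<in> K \<and> x \<noteq> y}"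

definition ann_open :: "'a::real_normed_vector set" where
  "ann_open = {x. 1/4 < norm x \<and> norm x < 4}"

definition ann :: "'a::real_normed_vector set" where
  "ann = {x. 1/2 \<le> norm x \<and> norm x \<le> 2}"

definition supK :: "'a set \<Rightarrow> ('a \<Rightarrow> real) \<Rightarrow> real" where
  "supK K h = Sup ((\<lambda>x. \<bar>h x\<bar>) ` K)"

definition C2a :: "real \<Rightarrow> ('a::euclidean_space \<Rightarrow> real) set" where
  "C2a \<alpha> = {u. C2_on (sph_ext u) ann_open \<and>
      (\<forall>b\<in>Basis. \<forall>c\<in>Basis. bdd_above (holder_quots \<alpha> ann (dderiv c (dderiv b (sph_ext u)))))}"

definition hnorm :: "real \<Rightarrow> ('a::euclidean_space \<Rightarrow> real) \<Rightarrow> real" where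
  "hnorm \<alpha> u = supK ann (sph_ext u) + (\<Sum>b\<in>Basis. supK ann (dderiv b (sph_ext u))) +
     (\<Sum>b\<in>Basis. \<Sum>c\<in>Basis. supK ann (dderiv c (dderiv b (sph_ext u))) +
        Sup (holder_quots \<alpha> ann (dderiv c (dderiv b (sph_ext u)))))"

text \<open>Laplacian of the Fubini-Study metric (= round sphere Laplacian on the Hopf lift).\<close>
definition sph_lap :: "('a::euclidean_space \<Rightarrow> real) \<Rightarrow> 'a \<Rightarrow> real" where
  "sph_lap u x = (\<Sum>b\<in>Basis. dderiv b (dderiv b (sph_ext u)) x)"

text \<open>The quotient map f (distance to [1:0:...:0]) lifted to the sphere.\<close>
definition fdist :: "'k \<Rightarrow> complex^'k \<Rightarrow> real" where
  "fdist i0 x = arccos (cmod (x $ i0))"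

definition XI :: "'k \<Rightarrow> (complex^'k \<Rightarrow> real) set" where
  "XI i0 = {u. \<exists>U. \<forall>x\<in>sphere 0 1. u x = U (fdist i0 x)}"

definition phi1 :: "nat \<Rightarrow> 'k \<Rightarrow> complex^'k \<Rightarrow> real" where
  "phi1 n i0 x = (real n + 1) / real n * (cos (fdist i0 x))\<^sup>2 - 1 / real n"

definition S_op :: "real \<Rightarrow> (complex^'k \<Rightarrow> real) \<Rightarrow> real \<Rightarrow> complex^'k \<Rightarrow> real" where
  "S_op q w lam x = - sph_lap w x + lam * (w x + 1 - (w x + 1) powr (q - 1))"

definition hdiff :: "real \<Rightarrow> 'k \<Rightarrow> (real \<Rightarrow> complex^'k \<Rightarrow> real) \<Rightarrow> real \<Rightarrow> bool" where
  "hdiff \<alpha> i0 w s \<longleftrightarrow> (\<exists>w' \<in> C2a \<alpha> \<inter> XI i0.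
     ((\<lambda>h. hnorm \<alpha> (\<lambda>x. w (s + h) x - w s x - h * w' x) / \<bar>h\<bar>) \<longlongrightarrow> 0) (at 0))"

definition is_complement :: "real \<Rightarrow> 'k \<Rightarrow> (complex^'k \<Rightarrow> real) set \<Rightarrow> (complex^'k \<Rightarrow> real) \<Rightarrow> bool" where
  "is_complement \<alpha> i0 M \<phi> \<longleftrightarrow> M \<subseteq> C2a \<alpha> \<inter> XI i0 \<and> (\<lambda>x. 0) \<in> M \<and>
     (\<forall>u\<in>M. \<forall>v\<in>M. (\<lambda>x. u x + v x) \<in> M) \<and> (\<forall>u\<in>M. \<forall>c. (\<lambda>x. c * u x) \<in> M) \<and>
     (\<forall>u\<in>C2a \<alpha> \<inter> XI i0. \<exists>c. \<exists>m\<in>M. \<forall>x\<in>sphere 0 1. u x = c * \<phi> x + m x) \<and>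
     (\<forall>c. \<forall>m\<in>M. (\<forall>x\<in>sphere 0 1. m x = c * \<phi> x) \<longrightarrow> c = 0)"

end

theory Submission
  imports Defs
begin

text \<open>
  A \<open>U(n)\<close>-invariant function on \<open>\<complex>P\<^sup>n\<close> is a function \<open>V\<close> of \<open>k = cos\<^sup>2 f \<in> [0,1]\<close>, and on such
  functions \<open>\<Delta>\<close> becomes \<open>4k(1-k)V'' + (4 - 4(n+1)k)V'\<close>. This operator is symmetric for the weight
  \<open>(1-k)\<^sup>n\<^sup>-\<^sup>1\<close> and \<open>\<phi>(k) = ((n+1)k - 1)/n\<close>, the profile of \<open>\<phi>\<^sub>1\<close>, is an eigenfunction with eigenvalue
  \<open>-4(n+1)\<close>. Integrating the equation against \<open>(1-k)\<^sup>n\<^sup>-\<^sup>1\<phi>\<close> therefore gives, for every solution,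
  \<open>\<integral>\<^sub>0\<^sup>1 (1-k)\<^sup>n\<^sup>-\<^sup>1 \<phi> (\<lambda> N(w) + 4(n+1) w) = 0\<close> with \<open>N(v) = v + 1 - (v+1)\<^sup>q\<^sup>-\<^sup>1\<close>.
  Along the bifurcating branch \<open>w = s\<phi> + o(s)\<close>, and \<open>4(n+1) = \<lambda>\<^sub>1(q-2)\<close> cancels the linear part of
  \<open>N\<close>; if moreover \<open>\<lambda>(s) = \<lambda>\<^sub>1 + o(s)\<close>, dividing by \<open>s\<^sup>2\<close> and letting \<open>s \<rightarrow> 0\<close> leaves
  \<open>-\<lambda>\<^sub>1(q-1)(q-2)/2 \<cdot> \<integral>\<^sub>0\<^sup>1 (1-k)\<^sup>n\<^sup>-\<^sup>1 \<phi>\<^sup>3 = 0\<close>. But that integral is \<open>2(n-1)/((n+2)(n+3)n\<^sup>3) \<noteq> 0\<close>.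
\<close>

definition nonlin :: "real \<Rightarrow> real \<Rightarrow> real" where
  "nonlin q v = v + 1 - (v + 1) powr (q - 1)"

lemma S_op_eq_nonlin: "S_op q w lam x = - sph_lap w x + lam * nonlin q (w x)"
  by (simp add: S_op_def nonlin_def)

lemma nonlin_taylor_bound:
  obtains K where "0 \<le> K"
    and "\<And>v. \<bar>v\<bar> \<le> 1/2 \<Longrightarrow> abs (nonlin q v + (q-2)* v + (q-1)*(q-2)/2* v^2) \<le> K * \<bar>v\<bar>^3"
proof
  define K where "K = \<bar>(q-1)*(q-2)*(q-3)\<bar>/6 * ((1/2) powr (q-4) + (3/2) powr (q-4))"
  show "0 \<le> K" unfolding K_def by simp
  define D where "D = (\<lambda>m::nat. \<lambda>t::real. (\<Prod>i<m. (q-1-real i)) * (1+t) powr (q-1-real m))"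
  have D_deriv: "\<forall>m t. m < 3 \<and> -1/2 \<le> t \<and> t \<le> 1/2 \<longrightarrow> DERIV (D m) t :> D (Suc m) t"
  proof (intro allI impI)
    fix m :: nat and t :: real assume "m < 3 \<and> -1/2 \<le> t \<and> t \<le> 1/2"
    hence pos: "1 + t > 0" by auto
    have "DERIV (\<lambda>t. (1+t) powr (q-1-real m)) t :> (q-1-real m) * (1+t) powr (q-1-real m - 1) * 1"
      by (rule DERIV_fun_powr[of "\<lambda>t. 1+t" _ t, simplified, OF _ pos]) (auto intro!: derivative_eq_intros)
    hence "DERIV (D m) t :> (\<Prod>i<m. (q-1-real i)) * ((q-1-real m) * (1+t) powr (q-1-real m - 1) * 1)"
      unfolding D_def by (intro DERIV_cmult)
    thus "DERIV (D m) t :> D (Suc m) t"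
      unfolding D_def by (simp add: algebra_simps)
  qed
  fix v :: real assume v: "\<bar>v\<bar> \<le> 1/2"
  show "abs (nonlin q v + (q-2)* v + (q-1)*(q-2)/2* v^2) \<le> K * \<bar>v\<bar>^3"
  proof (cases "v = 0")
    case True thus ?thesis by (simp add: nonlin_def)
  next
    case False
    have D0: "D 0 = (\<lambda>t. (1+t) powr (q-1))" unfolding D_def by simp
    have "-1/2 \<le> v" "v \<le> 1/2" using v by auto
    from Taylor[of 3 D "\<lambda>t. (1+t) powr (q-1)" "-1/2" "1/2" 0 v, OF _ D0 D_deriv _ _ this False]
    obtain t where t_between: "if v < 0 then v < t \<and> t < 0 else 0 < t \<and> t < v"
      and taylor: "(1+v) powr (q-1) = (\<Sum>m<3. (D m 0 / fact m) * v^m) + (D 3 t / fact 3) * v^3"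
      by auto
    have t: "\<bar>t\<bar> \<le> 1/2" using t_between v by (auto split: if_splits)
    have poly: "(\<Sum>m<3. (D m 0 / fact m) * v^m) = 1 + (q-1)* v + (q-1)*(q-2)/2* v^2"
      by (simp add: D_def eval_nat_numeral fact_numeral algebra_simps)
    have D3: "D 3 t = (q-1)*(q-2)*(q-3) * (1+t) powr (q-4)"
      by (simp add: D_def eval_nat_numeral algebra_simps)
    have powr_bound: "(1+t) powr (q-4) \<le> (1/2) powr (q-4) + (3/2) powr (q-4)"
    proof (cases "q - 4 \<ge> 0")
      case True
      have "(1+t) powr (q-4) \<le> (3/2) powr (q-4)" using t True by (intro powr_mono2) auto
      thus ?thesis by (smt (verit) powr_ge_zero)
    next
      case False
      have "(1+t) powr (q-4) \<le> (1/2) powr (q-4)" using t False by (intro powr_mono2') auto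
      thus ?thesis by (smt (verit) powr_ge_zero)
    qed
    have "nonlin q v + (q-2)* v + (q-1)*(q-2)/2* v^2 = -(D 3 t / 6 * v^3)"
      using taylor poly by (simp add: nonlin_def fact_numeral algebra_simps)
    hence "abs (nonlin q v + (q-2)* v + (q-1)*(q-2)/2* v^2) = \<bar>(q-1)*(q-2)*(q-3)\<bar>/6 * (1+t) powr (q-4) * \<bar>v\<bar>^3"
      by (simp add: D3 abs_mult power_abs)
    also have "\<dots> \<le> K * \<bar>v\<bar>^3" unfolding K_def
      by (intro mult_right_mono mult_left_mono powr_bound) auto
    finally show ?thesis .
  qed
qed

section \<open>Invariant functions as functions of \<open>cos\<^sup>2 f\<close>\<close>

text \<open>\<open>cos2_dist i0 y\<close> is \<open>cos\<^sup>2\<close> of the distance from \<open>[y]\<close> to \<open>[1:0:\<dots>:0]\<close>, homogeneous of degree 0;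
  \<open>profile_pt i0 j k\<close> is a unit vector where it equals \<open>k\<close>.\<close>

definition cos2_dist :: "'k::finite \<Rightarrow> complex^'k \<Rightarrow> real" where
  "cos2_dist i0 y = (cmod (y $ i0))^2 / (norm y)^2"

definition profile_pt :: "'k::finite \<Rightarrow> 'k \<Rightarrow> real \<Rightarrow> complex^'k" where
  "profile_pt i0 j k = sqrt k *\<^sub>R axis i0 1 + sqrt (1 - k) *\<^sub>R axis j 1"

definition profile :: "'k::finite \<Rightarrow> 'k \<Rightarrow> (complex^'k \<Rightarrow> real) \<Rightarrow> real \<Rightarrow> real" where
  "profile i0 j u k = u (profile_pt i0 j k)"

definition phi1_profile :: "nat \<Rightarrow> real \<Rightarrow> real" where
  "phi1_profile n k = ((real n + 1) * k - 1) / real n"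

lemma exists_other_index:
  fixes i0 :: "'k::finite"
  assumes "CARD('k) \<ge> 2"
  obtains j where "j \<noteq> i0"
proof -
  have "UNIV \<noteq> {i0}"
  proof
    assume "UNIV = {i0}"
    then have "CARD('k) = 1" by (metis card.empty card_insert_disjoint empty_iff finite.emptyI One_nat_def)
    with assms show False by simp
  qed
  then show thesis using that by blast
qed

lemma profile_pt_nth_i0: "i0 \<noteq> j \<Longrightarrow> profile_pt i0 j k $ i0 = complex_of_real (sqrt k)"
  by (simp add: profile_pt_def axis_def of_real_def)

lemma inner_profile_pt_self:
  "i0 \<noteq> j \<Longrightarrow> 0 \<le> k \<Longrightarrow> k \<le> 1 \<Longrightarrow> inner (profile_pt i0 j k) (profile_pt i0 j k) = 1"
  by (simp add: profile_pt_def inner_add_left inner_add_right inner_axis_axis)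

lemma norm_profile_pt: "i0 \<noteq> j \<Longrightarrow> 0 \<le> k \<Longrightarrow> k \<le> 1 \<Longrightarrow> norm (profile_pt i0 j k) = 1"
  using inner_profile_pt_self by (metis norm_eq_sqrt_inner real_sqrt_one)

lemma profile_pt_in_ann: "i0 \<noteq> j \<Longrightarrow> 0 \<le> k \<Longrightarrow> k \<le> 1 \<Longrightarrow> profile_pt i0 j k \<in> ann"
  using norm_profile_pt[of i0 j k] unfolding ann_def by simp

lemma cos2_dist_bounds: "0 \<le> cos2_dist i0 y" "cos2_dist i0 y \<le> 1"
proof -
  show "0 \<le> cos2_dist i0 y" by (simp add: cos2_dist_def)
  have "cmod (y$i0) \<le> norm y" by (rule Finite_Cartesian_Product.norm_nth_le)
  hence "(cmod (y$i0))^2 \<le> (norm y)^2" by (simp add: power_mono)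
  thus "cos2_dist i0 y \<le> 1" unfolding cos2_dist_def by (cases "y = 0") (auto simp: divide_le_eq_1)
qed

lemma cos2_dist_profile_pt: "i0 \<noteq> j \<Longrightarrow> 0 \<le> k \<Longrightarrow> k \<le> 1 \<Longrightarrow> cos2_dist i0 (profile_pt i0 j k) = k"
  by (simp add: cos2_dist_def norm_profile_pt profile_pt_nth_i0)

lemma sph_ext_unit: "norm x = 1 \<Longrightarrow> sph_ext u x = u x"
  by (simp add: sph_ext_def)

lemma sph_ext_eq_profile:
  assumes "u \<in> XI i0" "i0 \<noteq> j" "y \<noteq> 0"
  shows "sph_ext u y = profile i0 j u (cos2_dist i0 y)"
proof -
  obtain U where U: "\<forall>x\<in>sphere 0 1. u x = U (fdist i0 x)" using assms(1) unfolding XI_def by auto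
  have ny: "norm y > 0" using assms by auto
  have "cmod ((y /\<^sub>R norm y) $ i0) = cmod (y $ i0) / norm y"
    using ny by (simp add: divide_inverse mult.commute)
  moreover have "cmod (profile_pt i0 j (cos2_dist i0 y) $ i0) = cmod (y $ i0) / norm y"
    using ny by (simp add: profile_pt_nth_i0[OF assms(2)] cos2_dist_def real_sqrt_divide norm_divide)
  ultimately have "fdist i0 (y /\<^sub>R norm y) = fdist i0 (profile_pt i0 j (cos2_dist i0 y))"
    by (simp add: fdist_def)
  moreover have "profile_pt i0 j (cos2_dist i0 y) \<in> sphere 0 1"
    using norm_profile_pt[OF assms(2) cos2_dist_bounds] by simp
  ultimately show ?thesis using U ny by (simp add: sph_ext_def profile_def)
qed

lemma phi1_profile_pt:
  "i0 \<noteq> j \<Longrightarrow> 0 \<le> k \<Longrightarrow> k \<le> 1 \<Longrightarrow> phi1 n i0 (profile_pt i0 j k) = phi1_profile n k"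
  by (simp add: phi1_def phi1_profile_def fdist_def profile_pt_nth_i0 cos_arccos_abs diff_divide_distrib)

lemma abs_phi1_profile_le_1:
  assumes "n \<ge> 1" "0 \<le> k" "k \<le> 1"
  shows "\<bar>phi1_profile n k\<bar> \<le> 1"
proof -
  have "0 \<le> (real n + 1) * k" "(real n + 1) * k \<le> real n + 1" "1 \<le> real n"
    using assms by (auto simp: mult_left_le)
  then have "\<bar>(real n + 1) * k - 1\<bar> \<le> real n" by linarith
  then show ?thesis using assms unfolding phi1_profile_def by simp
qed

section \<open>The Laplacian of an invariant function\<close>

lemma axis_in_Basis: "axis i (1::complex) \<in> Basis"
  by (auto simp: Basis_vec_def Basis_complex_def)

lemma open_ann_open: "open (ann_open :: 'a::real_normed_vector set)"
  unfolding ann_open_def by (intro open_Collect_conj open_Collect_less continuous_intros)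

lemma dderiv_through_profile:
  fixes G :: "'a::real_normed_vector \<Rightarrow> real"
  assumes r: "r > 0"
    and G_eq: "\<And>t. \<bar>t\<bar> < r \<Longrightarrow> G (y0 + t *\<^sub>R b) = V (ky t)"
    and ky: "\<And>t. \<bar>t\<bar> < r \<Longrightarrow> (ky has_real_derivative k1 t) (at t)"
    and k1: "(k1 has_real_derivative k2) (at 0)"
    and V: "\<And>t. \<bar>t\<bar> < r \<Longrightarrow> (V has_real_derivative V' (ky t)) (at (ky t))"
    and V': "(V' has_real_derivative V'') (at (ky 0))"
  shows "dderiv b G y0 = V' (ky 0) * k1 0"
    and "dderiv b (dderiv b G) y0 = V'' * (k1 0)^2 + V' (ky 0) * k2"
proof -
  have first: "dderiv b G (y0 + t *\<^sub>R b) = V' (ky t) * k1 t" if t: "\<bar>t\<bar> < r" for t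
  proof -
    have "((\<lambda>s. ky (s + t)) has_real_derivative k1 t) (at 0)"
      using ky t DERIV_shift[of ky "k1 t" 0 t] by simp
    then have dV: "((\<lambda>s. V (ky (s + t))) has_real_derivative V' (ky t) * k1 t) (at 0)"
      using DERIV_chain2[of V "V' (ky t)"] V t by simp
    have op: "open {s. \<bar>s + t\<bar> < r}"
      by (intro open_Collect_less continuous_intros)
    have "((\<lambda>s. G (y0 + t *\<^sub>R b + s *\<^sub>R b)) has_real_derivative V' (ky t) * k1 t) (at 0)"
    proof (rule has_field_derivative_transform_within_open[OF dV op])
      show "0 \<in> {s. \<bar>s + t\<bar> < r}" using t by simp
      fix s assume "s \<in> {s. \<bar>s + t\<bar> < r}"
      then have "G (y0 + (s + t) *\<^sub>R b) = V (ky (s + t))" using G_eq by simp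
      moreover have "y0 + t *\<^sub>R b + s *\<^sub>R b = y0 + (s + t) *\<^sub>R b" by (simp add: algebra_simps)
      ultimately show "V (ky (s + t)) = G (y0 + t *\<^sub>R b + s *\<^sub>R b)" by metis
    qed
    then show ?thesis unfolding dderiv_def by (rule DERIV_imp_deriv)
  qed
  show "dderiv b G y0 = V' (ky 0) * k1 0" using first[of 0] r by simp
  have "((\<lambda>t. V' (ky t)) has_real_derivative V'' * k1 0) (at 0)"
    using DERIV_chain2[where f=V' and g=ky and x=0, OF V'] ky r by simp
  from DERIV_mult[OF this k1]
  have "((\<lambda>t. V' (ky t) * k1 t) has_real_derivative V'' * (k1 0)^2 + V' (ky 0) * k2) (at 0)"
    by (simp add: power2_eq_square algebra_simps)
  moreover have "open {t::real. \<bar>t\<bar> < r}" by (intro open_Collect_less continuous_intros)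
  ultimately have "((\<lambda>t. dderiv b G (y0 + t *\<^sub>R b)) has_real_derivative V'' * (k1 0)^2 + V' (ky 0) * k2) (at 0)"
    by (rule has_field_derivative_transform_within_open) (use r first in auto)
  then show "dderiv b (dderiv b G) y0 = V'' * (k1 0)^2 + V' (ky 0) * k2"
    unfolding dderiv_def[of b "dderiv b G"] by (rule DERIV_imp_deriv)
qed

text \<open>Moving from \<open>profile_pt i0 j k0\<close> by \<open>t\<close> along the real \<open>i0\<close>-axis gives
  \<open>cos2_dist = (\<surd>k0 + t)\<^sup>2 / ((\<surd>k0 + t)\<^sup>2 + 1 - k0)\<close>; \<open>axis_param k0\<close> is the inverse of this map.\<close>

definition axis_param :: "real \<Rightarrow> real \<Rightarrow> real" where
  "axis_param k0 x = sqrt (1 - k0) * sqrt (x / (1 - x)) - sqrt k0"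

definition axis_param_deriv :: "real \<Rightarrow> real \<Rightarrow> real" where
  "axis_param_deriv k0 x = sqrt (1 - k0) * (inverse (sqrt (x / (1 - x))) / 2) * (1 / (1 - x)^2)"

lemma has_real_derivative_axis_param:
  assumes "0 < x" "x < 1"
  shows "(axis_param k0 has_real_derivative axis_param_deriv k0 x) (at x)"
proof -
  have "((\<lambda>x. x / (1 - x)) has_real_derivative 1 / (1 - x)^2) (at x)"
    using assms by (auto intro!: derivative_eq_intros simp: field_simps power2_eq_square)
  from DERIV_chain2[OF DERIV_real_sqrt this]
  have "((\<lambda>x. sqrt (x / (1 - x))) has_real_derivative inverse (sqrt (x / (1 - x))) / 2 * (1 / (1 - x)^2)) (at x)"
    using assms by simp
  from DERIV_diff[OF DERIV_cmult[OF this, of "sqrt (1 - k0)"] DERIV_const[of "sqrt k0"]] show ?thesis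
    unfolding axis_param_def[abs_def] axis_param_deriv_def by (simp add: mult.assoc)
qed

lemma axis_param_deriv_differentiable:
  assumes "0 < x" "x < 1"
  shows "axis_param_deriv k0 differentiable (at x)"
  unfolding real_differentiable_def axis_param_deriv_def
  using assms by (auto intro!: exI derivative_eq_intros simp: divide_less_0_iff)

lemma axis_param_self: "0 \<le> k0 \<Longrightarrow> k0 < 1 \<Longrightarrow> axis_param k0 k0 = 0"
  by (simp add: axis_param_def real_sqrt_divide)

lemma axis_param_deriv_self:
  assumes "0 < k0" "k0 < 1"
  shows "axis_param_deriv k0 k0 * (2 * sqrt k0 * (1 - k0)) = 1"
proof -
  define a where "a = sqrt k0"
  define c where "c = sqrt (1 - k0)"
  have a: "a > 0" and c: "c > 0" and c2: "c^2 = 1 - k0" using assms by (auto simp: a_def c_def)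
  have "sqrt (k0 / (1 - k0)) = a / c" by (simp add: a_def c_def real_sqrt_divide)
  then have "axis_param_deriv k0 k0 = c * (c / a / 2) * (1 / (c^2)^2)"
    unfolding axis_param_deriv_def c_def[symmetric] c2 by simp
  moreover have "2 * sqrt k0 * (1 - k0) = 2 * a * c^2" by (simp add: a_def c2)
  ultimately have "axis_param_deriv k0 k0 * (2 * sqrt k0 * (1 - k0)) = c * (c / a / 2) * (1 / (c^2)^2) * (2 * a * c^2)"
    by (simp only:)
  also have "\<dots> = 1" using a c by (simp add: field_simps power2_eq_square)
  finally show ?thesis .
qed

lemma cos2_dist_axis_param:
  fixes i0 j :: "'k::finite"
  assumes ij: "i0 \<noteq> j" and k0: "0 \<le> k0" "k0 < 1" and x: "0 < x" "x < 1"
  defines "y \<equiv> profile_pt i0 j k0 + axis_param k0 x *\<^sub>R axis i0 1"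
  shows "y \<noteq> 0" and "cos2_dist i0 y = x"
proof -
  define a where "a = sqrt k0 + axis_param k0 x"
  define c where "c = sqrt (1 - k0)"
  have c: "c > 0" using k0 by (simp add: c_def)
  have a2: "a^2 = c^2 * (x / (1 - x))"
    using x by (simp add: a_def c_def axis_param_def power_mult_distrib)
  have y: "y = a *\<^sub>R axis i0 1 + c *\<^sub>R axis j 1"
    by (simp add: y_def a_def c_def profile_pt_def algebra_simps)
  have ny: "(norm y)^2 = a^2 + c^2"
    unfolding y power2_norm_eq_inner using ij
    by (simp add: inner_add_left inner_add_right inner_axis_axis power2_eq_square)
  then show "y \<noteq> 0" using c by auto
  have "y $ i0 = complex_of_real a" unfolding y using ij by (simp add: axis_def of_real_def)
  then show "cos2_dist i0 y = x"
    unfolding cos2_dist_def ny using x c by (simp add: a2 field_simps)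
qed

lemma C2_profile_derivatives:
  fixes G :: "complex^'k::finite \<Rightarrow> real" and V :: "real \<Rightarrow> real"
  assumes ij: "i0 \<noteq> j" and C2: "C2_on G ann_open"
    and G_eq: "\<And>y. y \<noteq> 0 \<Longrightarrow> G y = V (cos2_dist i0 y)"
    and k0: "0 < k0" "k0 < 1"
  shows "(V has_real_derivative deriv V k0) (at k0)"
    and "(deriv V has_real_derivative deriv (deriv V) k0) (at k0)"
    and "deriv V k0 * (2 * sqrt k0 * (1 - k0)) = dderiv (axis i0 1) G (profile_pt i0 j k0)"
proof -
  define e :: "complex^'k" where "e = axis i0 1"
  define y0 where "y0 = profile_pt i0 j k0"
  define h where "h = (\<lambda>t. G (y0 + t *\<^sub>R e))"
  define h' where "h' = (\<lambda>t. dderiv e G (y0 + t *\<^sub>R e))"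
  define S where "S = {0<..<1} \<inter> (\<lambda>x. y0 + axis_param k0 x *\<^sub>R e) -` ann_open"
  have e: "e \<in> Basis" unfolding e_def by (rule axis_in_Basis)
  have y0: "y0 \<in> ann_open" unfolding y0_def ann_open_def using norm_profile_pt[OF ij] k0 by simp
  have dh: "(h has_real_derivative h' t) (at t)" if "y0 + t *\<^sub>R e \<in> ann_open" for t
  proof -
    have "((\<lambda>s. G ((y0 + t *\<^sub>R e) + s *\<^sub>R e)) has_real_derivative h' t) (at 0)"
      using C2 e that unfolding C2_on_def h'_def dderiv_def
      by (simp add: DERIV_deriv_iff_field_differentiable)
    moreover have "(\<lambda>s. G ((y0 + t *\<^sub>R e) + s *\<^sub>R e)) = (\<lambda>s. h (s + t))"
      by (simp add: h_def algebra_simps)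
    ultimately show ?thesis using DERIV_shift[of h "h' t" 0 t] by simp
  qed
  have dh': "(h' has_real_derivative deriv h' 0) (at 0)"
    using C2 e y0 unfolding C2_on_def h'_def by (simp add: DERIV_deriv_iff_field_differentiable)
  have "continuous_on {0<..<1} (axis_param k0)"
    using has_real_derivative_axis_param
    by (meson DERIV_continuous continuous_at_imp_continuous_on greaterThanLessThan_iff)
  then have S: "open S" unfolding S_def
    by (intro continuous_open_preimage open_greaterThanLessThan open_ann_open continuous_intros)
  have k0S: "k0 \<in> S" unfolding S_def using k0 axis_param_self y0 by simp
  have dV: "(V has_real_derivative h' (axis_param k0 x) * axis_param_deriv k0 x) (at x)" if "x \<in> S" for x
  proof -
    from that have x: "0 < x" "x < 1" "y0 + axis_param k0 x *\<^sub>R e \<in> ann_open" unfolding S_def by auto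
    have "((\<lambda>x. h (axis_param k0 x)) has_real_derivative h' (axis_param k0 x) * axis_param_deriv k0 x) (at x)"
      by (rule DERIV_chain2[OF dh[OF x(3)] has_real_derivative_axis_param[OF x(1,2)]])
    moreover have "h (axis_param k0 x') = V x'" if "x' \<in> S" for x'
      using that cos2_dist_axis_param[OF ij, of k0 x'] G_eq k0
      unfolding S_def h_def y0_def e_def by auto
    ultimately show ?thesis by (rule has_field_derivative_transform_within_open[OF _ S that])
  qed
  have deriv_V: "deriv V x = h' (axis_param k0 x) * axis_param_deriv k0 x" if "x \<in> S" for x
    using dV[OF that] by (rule DERIV_imp_deriv)
  show "(V has_real_derivative deriv V k0) (at k0)" using dV[OF k0S] deriv_V[OF k0S] by simp
  obtain D where D: "(axis_param_deriv k0 has_real_derivative D) (at k0)"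
    using axis_param_deriv_differentiable[OF k0] real_differentiable_def by blast
  have "((\<lambda>x. h' (axis_param k0 x)) has_real_derivative deriv h' 0 * axis_param_deriv k0 k0) (at k0)"
    using DERIV_chain2[OF _ has_real_derivative_axis_param[OF k0]] dh' axis_param_self k0 by simp
  from DERIV_mult[OF this D]
  have "(deriv V has_real_derivative
      deriv h' 0 * axis_param_deriv k0 k0 * axis_param_deriv k0 k0 + D * h' (axis_param k0 k0)) (at k0)"
    by (rule has_field_derivative_transform_within_open[OF _ S k0S]) (simp add: deriv_V)
  then show "(deriv V has_real_derivative deriv (deriv V) k0) (at k0)"
    using DERIV_imp_deriv by metis
  show "deriv V k0 * (2 * sqrt k0 * (1 - k0)) = dderiv (axis i0 1) G (profile_pt i0 j k0)"
    using deriv_V[OF k0S] axis_param_deriv_self[OF k0] axis_param_self k0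
    by (simp add: h'_def e_def y0_def)
qed

lemma quadratic_ratio_derivs:
  fixes A B C \<Gamma> :: real
  defines "f \<equiv> \<lambda>t. (A + 2*B*t + C*t^2) / (1 + 2*\<Gamma>*t + t^2)"
    and "f' \<equiv> \<lambda>t. ((2*B + 2*C*t) * (1 + 2*\<Gamma>*t + t^2) - (A + 2*B*t + C*t^2) * (2*\<Gamma> + 2*t))
                  / (1 + 2*\<Gamma>*t + t^2)^2"
  shows "1 + 2*\<Gamma>*t + t^2 \<noteq> 0 \<Longrightarrow> (f has_real_derivative f' t) (at t)"
    and "(f' has_real_derivative (2*C - 8*B*\<Gamma> - 2*A + 8*A*\<Gamma>^2)) (at 0)"
    and "f' 0 = 2*B - 2*A*\<Gamma>"
proof -
  show "1 + 2*\<Gamma>*t + t^2 \<noteq> 0 \<Longrightarrow> (f has_real_derivative f' t) (at t)"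
    unfolding f_def f'_def
    by (auto intro!: derivative_eq_intros simp: power2_eq_square field_simps)
  show "(f' has_real_derivative (2*C - 8*B*\<Gamma> - 2*A + 8*A*\<Gamma>^2)) (at 0)"
    unfolding f'_def
    by (rule derivative_eq_intros refl | simp)+ (simp add: power2_eq_square algebra_simps)
  show "f' 0 = 2*B - 2*A*\<Gamma>" by (simp add: f'_def)
qed

lemma profile_pt_line_sq_norms:
  fixes b :: "complex^'k::finite"
  assumes ij: "i0 \<noteq> j" and k0: "0 \<le> k0" "k0 \<le> 1" and b: "b \<in> Basis"
  shows "(cmod ((profile_pt i0 j k0 + t *\<^sub>R b) $ i0))^2 = k0 + 2*(sqrt k0 * Re (b$i0))*t + (cmod (b$i0))^2*t^2"
    and "(norm (profile_pt i0 j k0 + t *\<^sub>R b))^2 = 1 + 2*(inner (profile_pt i0 j k0) b)*t + t^2"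
proof -
  have "(profile_pt i0 j k0 + t *\<^sub>R b) $ i0 = complex_of_real (sqrt k0) + t *\<^sub>R (b$i0)"
    using profile_pt_nth_i0[OF ij] by simp
  then show "(cmod ((profile_pt i0 j k0 + t *\<^sub>R b) $ i0))^2 = k0 + 2*(sqrt k0 * Re (b$i0))*t + (cmod (b$i0))^2*t^2"
    unfolding cmod_power2 using k0 by (simp add: power2_eq_square algebra_simps)
  show "(norm (profile_pt i0 j k0 + t *\<^sub>R b))^2 = 1 + 2*(inner (profile_pt i0 j k0) b)*t + t^2"
    unfolding power2_norm_eq_inner using inner_profile_pt_self[OF ij k0] b
    by (simp add: inner_add_left inner_add_right inner_commute power2_eq_square algebra_simps)
qed

lemma second_dderiv_profile:
  fixes G :: "complex^'k::finite \<Rightarrow> real" and V :: "real \<Rightarrow> real"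
  assumes ij: "i0 \<noteq> j" and C2: "C2_on G ann_open"
    and G_eq: "\<And>y. y \<noteq> 0 \<Longrightarrow> G y = V (cos2_dist i0 y)"
    and k0: "0 < k0" "k0 < 1" and b: "b \<in> Basis"
  shows "dderiv b (dderiv b G) (profile_pt i0 j k0) =
     deriv (deriv V) k0 * (2*(sqrt k0 * Re (b$i0)) - 2*k0*inner (profile_pt i0 j k0) b)^2 +
     deriv V k0 * (2*(cmod (b$i0))^2 - 8*(sqrt k0 * Re (b$i0))*inner (profile_pt i0 j k0) b
                   - 2*k0 + 8*k0*(inner (profile_pt i0 j k0) b)^2)"
proof -
  define y0 where "y0 = profile_pt i0 j k0"
  define \<Gamma> where "\<Gamma> = inner y0 b"
  define B where "B = sqrt k0 * Re (b$i0)"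
  define C where "C = (cmod (b$i0))^2"
  define ky where "ky = (\<lambda>t. (k0 + 2*B*t + C*t^2) / (1 + 2*\<Gamma>*t + t^2))"
  define k1 where "k1 = (\<lambda>t. ((2*B + 2*C*t) * (1 + 2*\<Gamma>*t + t^2) - (k0 + 2*B*t + C*t^2) * (2*\<Gamma> + 2*t))
                           / (1 + 2*\<Gamma>*t + t^2)^2)"
  have "norm y0 = 1" unfolding y0_def using norm_profile_pt[OF ij] k0 by simp
  then have "\<bar>\<Gamma>\<bar> \<le> 1" unfolding \<Gamma>_def using Cauchy_Schwarz_ineq2[of y0 b] b by simp
  then have denom_pos: "1 + 2*\<Gamma>*t + t^2 > 0" if "\<bar>t\<bar> < 1" for t
  proof -
    have "\<bar>2*\<Gamma>*t\<bar> \<le> 2*\<bar>t\<bar>" using \<open>\<bar>\<Gamma>\<bar> \<le> 1\<close> by (simp add: abs_mult mult_left_le_one_le)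
    moreover have "(1 - \<bar>t\<bar>)^2 > 0" using that by simp
    moreover have "(1 - \<bar>t\<bar>)^2 = 1 - 2*\<bar>t\<bar> + t^2" by (simp add: power2_eq_square algebra_simps)
    moreover have "-(2*\<Gamma>*t) \<le> \<bar>2*\<Gamma>*t\<bar>" by simp
    ultimately show ?thesis by linarith
  qed
  have line: "cos2_dist i0 (y0 + t *\<^sub>R b) = ky t" for t
    unfolding cos2_dist_def ky_def y0_def B_def C_def \<Gamma>_def
    using profile_pt_line_sq_norms[OF ij _ _ b, of k0 t] k0 by simp
  have nonzero: "y0 + t *\<^sub>R b \<noteq> 0" if "\<bar>t\<bar> < 1" for t
    using profile_pt_line_sq_norms(2)[OF ij _ _ b, of k0 t] k0 denom_pos[OF that]
    by (auto simp: y0_def \<Gamma>_def)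
  have dky: "(ky has_real_derivative k1 t) (at t)" if "\<bar>t\<bar> < 1" for t
    unfolding ky_def k1_def using quadratic_ratio_derivs(1)[of \<Gamma> t k0 B C] denom_pos[OF that] by simp
  have dk1: "(k1 has_real_derivative (2*C - 8*B*\<Gamma> - 2*k0 + 8*k0*\<Gamma>^2)) (at 0)"
    unfolding k1_def using quadratic_ratio_derivs(2)[where A=k0 and B=B and C=C and \<Gamma>=\<Gamma>] by simp
  have "isCont ky 0" using dky[of 0] by (simp add: DERIV_isCont)
  moreover have "ky 0 = k0" unfolding ky_def by simp
  ultimately have "\<forall>\<^sub>F t in nhds 0. ky t \<in> {0<..<1}"
    using k0 by (intro topological_tendstoD) (auto simp: isCont_def tendsto_at_iff_tendsto_nhds)
  then obtain d where d: "d > 0" "\<And>t. dist t 0 < d \<Longrightarrow> ky t \<in> {0<..<1}"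
    unfolding eventually_nhds_metric by blast
  define r where "r = min d 1"
  have "dderiv b (dderiv b G) y0 =
     deriv (deriv V) k0 * (k1 0)^2 + deriv V (ky 0) * (2*C - 8*B*\<Gamma> - 2*k0 + 8*k0*\<Gamma>^2)"
  proof (rule dderiv_through_profile(2)[where V=V and ky=ky])
    show "r > 0" using d by (simp add: r_def)
    show "G (y0 + t *\<^sub>R b) = V (ky t)" if "\<bar>t\<bar> < r" for t
      using G_eq nonzero line that r_def by simp
    show "(ky has_real_derivative k1 t) (at t)" if "\<bar>t\<bar> < r" for t
      using dky that r_def by simp
    show "(V has_real_derivative deriv V (ky t)) (at (ky t))" if "\<bar>t\<bar> < r" for t
      using C2_profile_derivatives(1)[OF ij C2 G_eq] d that r_def by simp
    show "(deriv V has_real_derivative deriv (deriv V) k0) (at (ky 0))"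
      using C2_profile_derivatives(2)[OF ij C2 G_eq k0] \<open>ky 0 = k0\<close> by simp
  qed (rule dk1)
  moreover have "k1 0 = 2*B - 2*k0*\<Gamma>" unfolding k1_def by simp
  ultimately show ?thesis unfolding \<open>ky 0 = k0\<close> y0_def C_def B_def \<Gamma>_def by simp
qed

lemma sum_second_dderiv_profile:
  fixes G :: "complex^'k::finite \<Rightarrow> real" and V :: "real \<Rightarrow> real"
  assumes ij: "i0 \<noteq> j" and C2: "C2_on G ann_open"
    and G_eq: "\<And>y. y \<noteq> 0 \<Longrightarrow> G y = V (cos2_dist i0 y)"
    and k0: "0 < k0" "k0 < 1" and card: "CARD('k) = n + 1"
  shows "(\<Sum>b\<in>Basis. dderiv b (dderiv b G) (profile_pt i0 j k0)) =
     4*k0*(1 - k0) * deriv (deriv V) k0 + (4 - 4*(real n + 1)*k0) * deriv V k0"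
proof -
  define y0 where "y0 = profile_pt i0 j k0"
  define e :: "complex^'k" where "e = axis i0 1"
  define e' :: "complex^'k" where "e' = axis i0 \<i>"
  define a where "a = sqrt k0"
  define V'' where "V'' = deriv (deriv V) k0"
  define V' where "V' = deriv V k0"
  define R where "R = (\<lambda>b::complex^'k. inner b e)"
  define I where "I = (\<lambda>b::complex^'k. inner b e')"
  define \<Gamma> where "\<Gamma> = (\<lambda>b::complex^'k. inner y0 b)"
  have a2: "a^2 = k0" using k0 by (simp add: a_def)
  have Re_nth: "Re (b$i0) = R b" and cmod_nth: "(cmod (b$i0))^2 = R b ^2 + I b ^2" for b :: "complex^'k"
    by (simp_all add: R_def I_def e_def e'_def inner_axis cmod_power2)
  txt \<open>Parseval for the unit vectors \<open>e\<close>, \<open>e'\<close>, \<open>y0\<close> collapses the sum over the basis.\<close>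
  have sum_R: "(\<Sum>b\<in>Basis. R b ^2) = 1"
    using euclidean_inner[of e e] by (simp add: R_def e_def power2_eq_square inner_commute inner_axis_axis)
  have sum_I: "(\<Sum>b\<in>Basis. I b ^2) = 1"
    using euclidean_inner[of e' e'] by (simp add: I_def e'_def power2_eq_square inner_commute inner_axis_axis)
  have sum_R\<Gamma>: "(\<Sum>b\<in>Basis. R b * \<Gamma> b) = a"
  proof -
    have "inner e y0 = a" using ij
      by (simp add: e_def y0_def profile_pt_def a_def inner_add_right inner_axis_axis)
    thus ?thesis using euclidean_inner[of e y0] by (simp add: R_def \<Gamma>_def inner_commute)
  qed
  have sum_\<Gamma>: "(\<Sum>b\<in>Basis. \<Gamma> b ^2) = 1"
    using euclidean_inner[of y0 y0] inner_profile_pt_self[OF ij] k0 by (simp add: \<Gamma>_def y0_def power2_eq_square)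
  have card_Basis: "card (Basis :: (complex^'k) set) = 2 * (n + 1)"
    using DIM_cart[where 'a=complex and 'b='k] card by simp
  have "(\<Sum>b\<in>Basis. dderiv b (dderiv b G) y0) =
     (\<Sum>b\<in>Basis. (4*a^2*V'' + 2*V') * R b^2 + 2*V' * I b^2 + (-8*a*k0*V'' - 8*a*V') * (R b * \<Gamma> b)
        + (4*k0^2*V'' + 8*k0*V') * \<Gamma> b^2 - 2*k0*V')"
  proof (rule sum.cong[OF refl])
    fix b :: "complex^'k" assume b: "b \<in> Basis"
    show "dderiv b (dderiv b G) y0 = (4*a^2*V'' + 2*V') * R b^2 + 2*V' * I b^2
        + (-8*a*k0*V'' - 8*a*V') * (R b * \<Gamma> b) + (4*k0^2*V'' + 8*k0*V') * \<Gamma> b^2 - 2*k0*V'"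
    proof -
      have "dderiv b (dderiv b G) y0 = V'' * (2*(a * R b) - 2*k0*\<Gamma> b)^2
          + V' * (2*(R b^2 + I b^2) - 8*(a * R b)*\<Gamma> b - 2*k0 + 8*k0*(\<Gamma> b)^2)"
        using second_dderiv_profile[OF ij C2 G_eq k0 b]
        by (simp add: y0_def V''_def V'_def a_def \<Gamma>_def Re_nth cmod_nth)
      then show ?thesis by (simp add: power2_eq_square algebra_simps)
    qed
  qed
  also have "\<dots> = (4*a^2*V'' + 2*V') * (\<Sum>b\<in>Basis. R b^2) + 2*V' * (\<Sum>b\<in>Basis. I b^2)
      + (-8*a*k0*V'' - 8*a*V') * (\<Sum>b\<in>Basis. R b * \<Gamma> b) + (4*k0^2*V'' + 8*k0*V') * (\<Sum>b\<in>Basis. \<Gamma> b^2)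
      - 2*k0*V' * card (Basis :: (complex^'k) set)"
    by (simp add: sum.distrib sum_subtractf sum_distrib_left)
  also have "\<dots> = 4*k0*(1 - k0) * V'' + (4 - 4*(real n + 1)*k0) * V'"
    unfolding sum_R sum_I sum_R\<Gamma> sum_\<Gamma> card_Basis a2[symmetric] by (simp add: power2_eq_square algebra_simps)
  finally show ?thesis by (simp add: y0_def V''_def V'_def)
qed

section \<open>The weighted integral identity\<close>

lemma ann_subset_ann_open: "ann \<subseteq> ann_open"
  unfolding ann_def ann_open_def by auto

lemma compact_ann: "compact (ann :: 'a::euclidean_space set)"
proof -
  have "ann = cball (0::'a) 2 \<inter> - ball 0 (1/2)" unfolding ann_def by auto
  moreover have "compact (cball (0::'a) 2 \<inter> - ball 0 (1/2))"
    by (intro compact_Int_closed compact_cball closed_Compl open_ball)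
  ultimately show ?thesis by simp
qed

lemma bounded_on_ann:
  fixes f :: "'a::euclidean_space \<Rightarrow> real"
  assumes "continuous_on ann_open f"
  obtains M where "\<And>x. x \<in> ann \<Longrightarrow> \<bar>f x\<bar> \<le> M"
proof -
  have "compact (f ` ann)"
    using assms ann_subset_ann_open compact_ann by (metis compact_continuous_image continuous_on_subset)
  then obtain M where "\<forall>y\<in>f ` ann. norm y \<le> M" using compact_imp_bounded bounded_iff by metis
  then show thesis using that by auto
qed

lemma C2_profile_bounds:
  fixes G :: "complex^'k::finite \<Rightarrow> real" and V :: "real \<Rightarrow> real"
  assumes ij: "i0 \<noteq> j" and C2: "C2_on G ann_open"
    and G_eq: "\<And>y. y \<noteq> 0 \<Longrightarrow> G y = V (cos2_dist i0 y)"
  obtains C where "\<And>k. 0 < k \<Longrightarrow> k < 1 \<Longrightarrow> \<bar>deriv V k\<bar> * (2 * sqrt k * (1 - k)) \<le> C"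
    and "\<And>k. 0 \<le> k \<Longrightarrow> k \<le> 1 \<Longrightarrow> \<bar>V k\<bar> \<le> C"
proof -
  have "continuous_on ann_open (dderiv (axis i0 1) G)"
    using C2 axis_in_Basis unfolding C2_on_def by blast
  then obtain C1 where C1: "\<And>x. x \<in> ann \<Longrightarrow> \<bar>dderiv (axis i0 1) G x\<bar> \<le> C1"
    using bounded_on_ann by blast
  have "continuous_on ann_open G" using C2 unfolding C2_on_def by blast
  then obtain C0 where C0: "\<And>x. x \<in> ann \<Longrightarrow> \<bar>G x\<bar> \<le> C0" using bounded_on_ann by blast
  show thesis
  proof (rule that[of "max C0 C1"])
    fix k :: real assume k: "0 < k" "k < 1"
    have "\<bar>deriv V k * (2 * sqrt k * (1 - k))\<bar> \<le> C1"
      using C2_profile_derivatives(3)[OF ij C2 G_eq k] C1 profile_pt_in_ann[OF ij] k by simp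
    then show "\<bar>deriv V k\<bar> * (2 * sqrt k * (1 - k)) \<le> max C0 C1" using k by (simp add: abs_mult)
  next
    fix k :: real assume k: "0 \<le> k" "k \<le> 1"
    have "profile_pt i0 j k \<noteq> 0" using norm_profile_pt[OF ij k] by auto
    then have "V k = G (profile_pt i0 j k)" using G_eq cos2_dist_profile_pt[OF ij k] by simp
    then show "\<bar>V k\<bar> \<le> max C0 C1" using C0 profile_pt_in_ann[OF ij k] by fastforce
  qed
qed

lemma profile_ode:
  fixes u :: "complex^'k::finite \<Rightarrow> real"
  assumes ij: "i0 \<noteq> j" and card: "CARD('k) = n + 1"
    and u: "u \<in> C2a \<alpha>" "u \<in> XI i0" and sol: "\<forall>x\<in>sphere 0 1. S_op q u L x = 0"
    and k: "0 < k" "k < 1"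
  shows "4*k*(1 - k) * deriv (deriv (profile i0 j u)) k + (4 - 4*(real n + 1)*k) * deriv (profile i0 j u) k
           = L * nonlin q (profile i0 j u k)"
proof -
  have C2: "C2_on (sph_ext u) ann_open" using u unfolding C2a_def by simp
  have "norm (profile_pt i0 j k) = 1" using norm_profile_pt[OF ij] k by simp
  then have "sph_lap u (profile_pt i0 j k) = L * nonlin q (profile i0 j u k)"
    using sol by (simp add: S_op_eq_nonlin profile_def)
  moreover have "sph_lap u (profile_pt i0 j k) =
      4*k*(1 - k) * deriv (deriv (profile i0 j u)) k + (4 - 4*(real n + 1)*k) * deriv (profile i0 j u) k"
    unfolding sph_lap_def
    by (rule sum_second_dderiv_profile[OF ij C2 sph_ext_eq_profile[OF u(2) ij] k card])
  ultimately show ?thesis by simp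
qed

text \<open>Lagrange's identity for \<open>V \<mapsto> 4k(1-k)V'' + (4 - 4(n+1)k)V'\<close>, which is symmetric for the
  weight \<open>(1-k)\<^sup>n\<^sup>-\<^sup>1\<close> and has \<open>phi1_profile n\<close> as eigenfunction with eigenvalue \<open>-4(n+1)\<close>.\<close>

lemma weighted_lagrange_identity:
  fixes V V' :: "real \<Rightarrow> real"
  assumes n: "n \<ge> 1"
    and V: "(V has_real_derivative V' k) (at k)" and V': "(V' has_real_derivative V'') (at k)"
  shows "((\<lambda>k. 4*k*(1 - k)^n * (V' k * phi1_profile n k - V k * ((real n + 1) / real n)))
           has_real_derivative (1 - k)^(n-1) * phi1_profile n k
             * (4*k*(1 - k) * V'' + (4 - 4*(real n + 1)*k) * V' k + 4*(real n + 1) * V k)) (at k)"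
proof -
  define c where "c = (real n + 1) / real n"
  have dphi: "(phi1_profile n has_real_derivative c) (at k)"
    unfolding phi1_profile_def[abs_def] c_def using n by (auto intro!: derivative_eq_intros)
  have "((\<lambda>k. 4*k*(1 - k)^n) has_real_derivative 4*(1 - k)^n - 4*k*(real n * (1 - k)^(n-1))) (at k)"
    by (auto intro!: derivative_eq_intros simp: algebra_simps)
  moreover have "((\<lambda>k. V' k * phi1_profile n k - V k * c) has_real_derivative
      V'' * phi1_profile n k + V' k * c - V' k * c) (at k)"
    using DERIV_diff[OF DERIV_mult[OF V' dphi] DERIV_mult[OF V DERIV_const[of c]]] by simp
  ultimately have "((\<lambda>k. 4*k*(1 - k)^n * (V' k * phi1_profile n k - V k * c)) has_real_derivative
      (4*(1 - k)^n - 4*k*(real n * (1 - k)^(n-1))) * (V' k * phi1_profile n k - V k * c)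
      + (V'' * phi1_profile n k + V' k * c - V' k * c) * (4*k*(1 - k)^n)) (at k)"
    by (rule DERIV_mult)
  moreover have "(1 - k)^n = (1 - k) * (1 - k)^(n-1)" using n by (simp add: power_eq_if)
  moreover have "(4*((1 - k) * p) - 4*k*(real n * p)) * (v' * phi1_profile n k - v * c)
      + (v'' * phi1_profile n k + v' * c - v' * c) * (4*k*((1 - k) * p))
      = p * phi1_profile n k * (4*k*(1 - k) * v'' + (4 - 4*(real n + 1)*k) * v' + 4*(real n + 1) * v)"
    for p v v' v'' :: real
    using n unfolding c_def phi1_profile_def by (simp add: field_simps)
  ultimately show ?thesis unfolding c_def[symmetric] by simp
qed

lemma has_integral_zero_if_boundary_vanishes:
  fixes F f g :: "real \<Rightarrow> real"
  assumes "a \<le> b"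
    and F: "\<And>x. a < x \<Longrightarrow> x < b \<Longrightarrow> (F has_real_derivative f x) (at x)"
    and dom: "\<And>x. a < x \<Longrightarrow> x < b \<Longrightarrow> \<bar>F x\<bar> \<le> g x"
    and g: "isCont g a" "isCont g b" "g a = 0" "g b = 0"
  shows "(f has_integral 0) {a..b}"
proof -
  define F0 where "F0 = (\<lambda>x. if x \<in> {a<..<b} then F x else 0)"
  have dF0: "(F0 has_real_derivative f x) (at x)" if "x \<in> {a<..<b}" for x
    by (rule has_field_derivative_transform_within_open[OF F, of x "{a<..<b}"]) (use that in \<open>auto simp: F0_def\<close>)
  have dom0: "norm (F0 x) \<le> g x" if x: "x \<in> {a..b}" for x
  proof (cases "x \<in> {a<..<b}")
    case True
    then show ?thesis using dom by (simp add: F0_def)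
  next
    case False
    then have "x = a \<or> x = b" using x by auto
    then show ?thesis using False g(3,4) by (auto simp: F0_def)
  qed
  have "continuous (at x within {a..b}) F0" if x: "x \<in> {a..b}" for x
  proof (cases "x \<in> {a<..<b}")
    case True
    then show ?thesis using dF0 DERIV_isCont continuous_at_imp_continuous_at_within by blast
  next
    case False
    then have "x = a \<or> x = b" "F0 x = 0" using x by (auto simp: F0_def)
    have "\<forall>\<^sub>F y in at x within {a..b}. norm (F0 y) \<le> g y"
      using dom0 by (auto simp: eventually_at_filter)
    moreover from \<open>x = a \<or> x = b\<close> have "(g \<longlongrightarrow> 0) (at x within {a..b})"
      using g by (metis continuous_at_imp_continuous_at_within continuous_within)
    ultimately have "(F0 \<longlongrightarrow> 0) (at x within {a..b})" by (rule Lim_null_comparison)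
    then show ?thesis unfolding continuous_within \<open>F0 x = 0\<close> .
  qed
  then have "continuous_on {a..b} F0" by (simp add: continuous_on_eq_continuous_within)
  moreover have "(F0 has_vector_derivative f x) (at x)" if "x \<in> {a<..<b}" for x
    using dF0[OF that] by (simp add: has_real_derivative_iff_has_vector_derivative)
  ultimately have "(f has_integral (F0 b - F0 a)) {a..b}"
    by (rule fundamental_theorem_of_calculus_interior[OF assms(1)])
  then show ?thesis by (simp add: F0_def)
qed

lemma lagrange_bracket_bound:
  fixes v v' C k :: real
  assumes n: "n \<ge> 1" and k: "0 < k" "k < 1"
    and v': "\<bar>v'\<bar> * (2 * sqrt k * (1 - k)) \<le> C" and v: "\<bar>v\<bar> \<le> C"
  defines "c \<equiv> (real n + 1) / real n"
  shows "\<bar>4*k*(1 - k)^n * (v' * phi1_profile n k - v * c)\<bar>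
           \<le> 2*C * sqrt k * (1 - k)^(n-1) + 4*k*(1 - k)^n * C * c"
proof -
  have "2 * sqrt k * (1 - k)^(n-1) * (2 * sqrt k * (1 - k)) = (2 * 2) * (sqrt k * sqrt k) * ((1 - k)^(n-1) * (1 - k))"
    by (simp only: mult_ac)
  also have "\<dots> = 4*k*(1 - k)^n"
    using k n by (simp add: power_eq_if mult_ac)
  finally have "\<bar>4*k*(1 - k)^n * (v' * phi1_profile n k)\<bar>
      = 2 * sqrt k * (1 - k)^(n-1) * ((\<bar>v'\<bar> * (2 * sqrt k * (1 - k))) * \<bar>phi1_profile n k\<bar>)"
    using k by (simp add: abs_mult mult_ac)
  also have "\<dots> \<le> 2 * sqrt k * (1 - k)^(n-1) * (C * 1)"
    using v v' abs_phi1_profile_le_1[of n k] n k by (intro mult_left_mono mult_mono) auto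
  finally have "\<bar>4*k*(1 - k)^n * (v' * phi1_profile n k)\<bar> \<le> 2*C * sqrt k * (1 - k)^(n-1)"
    by (simp add: mult_ac)
  moreover have "\<bar>4*k*(1 - k)^n * (v * c)\<bar> \<le> 4*k*(1 - k)^n * C * c"
  proof -
    have "c \<ge> 0" by (simp add: c_def)
    then have "\<bar>4*k*(1 - k)^n * (v * c)\<bar> = 4*k*(1 - k)^n * c * \<bar>v\<bar>"
      using k by (simp add: abs_mult)
    also have "\<dots> \<le> 4*k*(1 - k)^n * c * C"
      using v k \<open>c \<ge> 0\<close> by (intro mult_left_mono) auto
    finally show ?thesis by (simp add: mult_ac)
  qed
  moreover have "\<bar>4*k*(1 - k)^n * (v' * phi1_profile n k - v * c)\<bar>
      \<le> \<bar>4*k*(1 - k)^n * (v' * phi1_profile n k)\<bar> + \<bar>4*k*(1 - k)^n * (v * c)\<bar>"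
    unfolding right_diff_distrib by (rule abs_triangle_ineq4)
  ultimately show ?thesis by linarith
qed

definition moment_integrand :: "nat \<Rightarrow> real \<Rightarrow> real \<Rightarrow> real \<Rightarrow> real \<Rightarrow> real" where
  "moment_integrand n q L v k = (1 - k)^(n-1) * phi1_profile n k * (L * nonlin q v + 4*(real n + 1) * v)"

lemma profile_integral_identity:
  fixes u :: "complex^'k::finite \<Rightarrow> real"
  assumes ij: "i0 \<noteq> j" and card: "CARD('k) = n + 1" and n: "n \<ge> 2"
    and u: "u \<in> C2a \<alpha>" "u \<in> XI i0" and sol: "\<forall>x\<in>sphere 0 1. S_op q u L x = 0"
  shows "((\<lambda>k. moment_integrand n q L (profile i0 j u k) k) has_integral 0) {0..1}"
proof -
  define V where "V = profile i0 j u"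
  define c where "c = (real n + 1) / real n"
  have C2: "C2_on (sph_ext u) ann_open" using u unfolding C2a_def by simp
  have G_eq: "\<And>y. y \<noteq> 0 \<Longrightarrow> sph_ext u y = V (cos2_dist i0 y)"
    using sph_ext_eq_profile[OF u(2) ij] unfolding V_def .
  txt \<open>Only \<open>\<surd>k (1-k) V'\<close> is known to be bounded near the endpoints, which still makes the
    bracket of Lagrange's identity vanish there.\<close>
  obtain C where C': "\<And>k. 0 < k \<Longrightarrow> k < 1 \<Longrightarrow> \<bar>deriv V k\<bar> * (2 * sqrt k * (1 - k)) \<le> C"
    and C: "\<And>k. 0 \<le> k \<Longrightarrow> k \<le> 1 \<Longrightarrow> \<bar>V k\<bar> \<le> C"
    using C2_profile_bounds[OF ij C2 G_eq] by blast
  define g where "g = (\<lambda>k. 2*C * sqrt k * (1 - k)^(n-1) + 4*k*(1 - k)^n * C * c)"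
  show ?thesis
  proof (rule has_integral_zero_if_boundary_vanishes
      [where F="\<lambda>k. 4*k*(1 - k)^n * (deriv V k * phi1_profile n k - V k * c)" and g=g])
    fix k :: real assume k: "0 < k" "k < 1"
    have "((\<lambda>k. 4*k*(1 - k)^n * (deriv V k * phi1_profile n k - V k * c)) has_real_derivative
        (1 - k)^(n-1) * phi1_profile n k
          * (4*k*(1 - k) * deriv (deriv V) k + (4 - 4*(real n + 1)*k) * deriv V k + 4*(real n + 1) * V k)) (at k)"
      unfolding c_def using n C2_profile_derivatives(1,2)[OF ij C2 G_eq k]
      by (intro weighted_lagrange_identity) auto
    then show "((\<lambda>k. 4*k*(1 - k)^n * (deriv V k * phi1_profile n k - V k * c)) has_real_derivative
        moment_integrand n q L (profile i0 j u k) k) (at k)"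
      using profile_ode[OF ij card u sol k] unfolding V_def moment_integrand_def by simp
    show "\<bar>4*k*(1 - k)^n * (deriv V k * phi1_profile n k - V k * c)\<bar> \<le> g k"
      using lagrange_bracket_bound[OF _ k C'[OF k] C] n k unfolding g_def c_def by simp
  next
    show "isCont g 0" "isCont g 1" unfolding g_def by (intro continuous_intros)+
    show "g 0 = 0" "g 1 = 0" unfolding g_def using n by (auto simp: power_0_left)
  qed simp
qed

lemma decomposed_integral_identity:
  fixes u b :: "complex^'k::finite \<Rightarrow> real"
  assumes ij: "i0 \<noteq> j" and card: "CARD('k) = n + 1" and n: "n \<ge> 2"
    and u: "u \<in> C2a \<alpha>" "u \<in> XI i0" and sol: "\<forall>x\<in>sphere 0 1. S_op q u L x = 0"
    and decomp: "\<forall>x\<in>sphere 0 1. u x = s * phi1 n i0 x + b x"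
  shows "((\<lambda>k. moment_integrand n q L (s * phi1_profile n k + b (profile_pt i0 j k)) k) has_integral 0) {0..1}"
proof (rule rev_iffD1[OF profile_integral_identity[OF ij card n u sol] has_integral_cong])
  fix k :: real assume k: "k \<in> {0..1}"
  then have "norm (profile_pt i0 j k) = 1" using norm_profile_pt[OF ij] by simp
  then show "moment_integrand n q L (profile i0 j u k) k
      = moment_integrand n q L (s * phi1_profile n k + b (profile_pt i0 j k)) k"
    using decomp phi1_profile_pt[OF ij] k by (simp add: profile_def)
qed

section \<open>Pointwise bounds by the Hoelder norm\<close>

lemma abs_le_supK:
  fixes f :: "'a::euclidean_space \<Rightarrow> real"
  assumes "continuous_on ann_open f" "x \<in> ann"
  shows "\<bar>f x\<bar> \<le> supK ann f"
proof -
  obtain M where "\<And>x. x \<in> ann \<Longrightarrow> \<bar>f x\<bar> \<le> M" using bounded_on_ann[OF assms(1)] by blast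
  then have "bdd_above ((\<lambda>x. \<bar>f x\<bar>) ` ann)" by (intro bdd_aboveI) auto
  then show ?thesis unfolding supK_def using assms(2) by (auto intro: cSup_upper)
qed

lemma exists_antipodal_in_ann: "\<exists>x::'a::euclidean_space. x \<in> ann \<and> -x \<in> ann \<and> x \<noteq> -x"
proof -
  obtain b :: 'a where "b \<in> Basis" using nonempty_Basis by blast
  then have "norm b = 1" by simp
  moreover have "b \<noteq> -b"
  proof
    assume "b = -b"
    then have "2 *\<^sub>R b = 0" by (metis add.right_inverse scaleR_2)
    then show False using \<open>norm b = 1\<close> by simp
  qed
  ultimately show ?thesis unfolding ann_def by (intro exI[of _ b]) auto
qed

lemma supK_nonneg:
  fixes f :: "'a::euclidean_space \<Rightarrow> real"
  assumes "continuous_on ann_open f"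
  shows "0 \<le> supK ann f"
  using exists_antipodal_in_ann abs_le_supK[OF assms] by (meson abs_ge_zero order_trans)

lemma Sup_holder_quots_nonneg:
  fixes h :: "'a::euclidean_space \<Rightarrow> real"
  assumes "bdd_above (holder_quots \<alpha> ann h)"
  shows "0 \<le> Sup (holder_quots \<alpha> ann h)"
proof -
  obtain x :: 'a where "x \<in> ann" "-x \<in> ann" "x \<noteq> -x" using exists_antipodal_in_ann by blast
  then have "\<bar>h x - h (-x)\<bar> / (dist x (-x) powr \<alpha>) \<in> holder_quots \<alpha> ann h"
    unfolding holder_quots_def by blast
  then show ?thesis using cSup_upper[OF _ assms] by (meson abs_ge_zero divide_nonneg_nonneg order_trans powr_ge_zero)
qed

lemma abs_le_hnorm:
  fixes u :: "'a::euclidean_space \<Rightarrow> real"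
  assumes u: "u \<in> C2a \<alpha>" and x: "norm x = 1"
  shows "\<bar>u x\<bar> \<le> hnorm \<alpha> u"
proof -
  have C2: "C2_on (sph_ext u) ann_open"
    and H: "\<forall>b\<in>Basis. \<forall>c\<in>Basis. bdd_above (holder_quots \<alpha> ann (dderiv c (dderiv b (sph_ext u))))"
    using u unfolding C2a_def by auto
  have c1: "\<And>b. b \<in> Basis \<Longrightarrow> continuous_on ann_open (dderiv b (sph_ext u))"
    and c2: "\<And>b c. b \<in> Basis \<Longrightarrow> c \<in> Basis \<Longrightarrow> continuous_on ann_open (dderiv c (dderiv b (sph_ext u)))"
    using C2 unfolding C2_on_def by blast+
  have "0 \<le> (\<Sum>b\<in>Basis. supK ann (dderiv b (sph_ext u)))"
    by (intro sum_nonneg supK_nonneg c1)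
  moreover have "0 \<le> (\<Sum>b\<in>Basis. \<Sum>c\<in>Basis. supK ann (dderiv c (dderiv b (sph_ext u))) +
        Sup (holder_quots \<alpha> ann (dderiv c (dderiv b (sph_ext u)))))"
    using H by (intro sum_nonneg add_nonneg_nonneg supK_nonneg c2 Sup_holder_quots_nonneg) auto
  moreover have "\<bar>u x\<bar> \<le> supK ann (sph_ext u)"
    using abs_le_supK[of "sph_ext u" x] C2 x sph_ext_unit[OF x] unfolding C2_on_def ann_def by simp
  ultimately show ?thesis unfolding hnorm_def by linarith
qed

section \<open>Expansion along the branch\<close>

lemma has_real_derivative_one_minus_power:
  "((\<lambda>k::real. (1 - k)^(Suc p)) has_real_derivative -(real (Suc p) * (1 - x)^p)) (at x)"
proof -
  have "((\<lambda>k::real. 1 - k) has_real_derivative -1) (at x)" by (auto intro!: derivative_eq_intros)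
  from DERIV_chain2[OF DERIV_pow this, of "Suc p"] show ?thesis by simp
qed

text \<open>With \<open>N = m + 1\<close> one has \<open>phi1_profile N k = 1 - (N+1)/N \<cdot> (1-k)\<close>, so the antiderivative is
  obtained by expanding the cube in powers of \<open>1 - k\<close>.\<close>

lemma antiderivative_weight_phi1_profile_cube:
  fixes m :: nat
  defines "N \<equiv> real (Suc m)"
  defines "H \<equiv> \<lambda>k::real. (-1/N^3) * (N^2 * (1-k)^(Suc m) + (-3*N^2) * (1-k)^(Suc (Suc m))
            + (3*N*(N+1)^2/(N+2)) * (1-k)^(Suc (Suc (Suc m)))
            + (0 - (N+1)^3/(N+3)) * (1-k)^(Suc (Suc (Suc (Suc m)))))"
  shows "(H has_real_derivative (1-x)^m * phi1_profile (Suc m) x ^ 3) (at x)"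
proof -
  have N0: "N > 0" unfolding N_def by simp
  have N: "real (Suc (Suc m)) = N + 1" "real (Suc (Suc (Suc m))) = N + 2"
      "real (Suc (Suc (Suc (Suc m)))) = N + 3" "real (Suc m) = N" unfolding N_def by auto
  have "(H has_real_derivative (-1/N^3) * (N^2 * (-(N * (1-x)^m)) + (-3*N^2) * (-((N+1) * (1-x)^(Suc m)))
            + (3*N*(N+1)^2/(N+2)) * (-((N+2) * (1-x)^(Suc (Suc m))))
            + (0 - (N+1)^3/(N+3)) * (-((N+3) * (1-x)^(Suc (Suc (Suc m))))))) (at x)"
    unfolding H_def
    by (intro DERIV_cmult DERIV_add has_real_derivative_one_minus_power[of m x, unfolded N]
       has_real_derivative_one_minus_power[of "Suc m" x, unfolded N]
       has_real_derivative_one_minus_power[of "Suc (Suc m)" x, unfolded N]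
       has_real_derivative_one_minus_power[of "Suc (Suc (Suc m))" x, unfolded N])
  moreover have "(-1/N^3) * (N^2 * (-(N * p)) + (-3*N^2) * (-((N+1) * (y * p)))
            + (3*N*(N+1)^2/(N+2)) * (-((N+2) * (y * (y * p))))
            + (0 - (N+1)^3/(N+3)) * (-((N+3) * (y * (y * (y * p))))))
       = p * (((N+1)*(1-y) - 1)/N)^3" for p y
  proof -
    define A where "A = 3*N*(N+1)^2/(N+2)"
    define B where "B = (N+1)^3/(N+3)"
    have A: "A*(N+2) = 3*N*(N+1)^2" unfolding A_def using N0 by simp
    have B: "B*(N+3) = (N+1)^3" unfolding B_def using N0 by simp
    have "(-1/N^3) * (N^2 * (-(N * p)) + (-3*N^2) * (-((N+1) * (y * p)))
            + A * (-((N+2) * (y * (y * p)))) + (0 - B) * (-((N+3) * (y * (y * (y * p))))))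
        = (-1/N^3) * (-(N^3*p) + 3*N^2*(N+1)*(y*p) - (A*(N+2))*(y*(y*p)) + (B*(N+3))*(y*(y*(y*p))))"
      by (simp add: algebra_simps power3_eq_cube power2_eq_square)
    also have "\<dots> = p * (((N+1)*(1-y) - 1)/N)^3"
      unfolding A B using N0 by (simp add: field_simps power2_eq_square power3_eq_cube)
    finally show ?thesis unfolding A_def B_def .
  qed
  ultimately show ?thesis unfolding phi1_profile_def N[symmetric] by simp
qed

lemma integral_weight_phi1_profile_cube:
  assumes "n \<ge> 1"
  shows "((\<lambda>k. (1-k)^(n-1) * phi1_profile n k ^ 3) has_integral
           2*(real n - 1) / ((real n + 2)*(real n + 3)*(real n)^3)) {0..1}"
proof -
  obtain m where n: "n = Suc m" using assms by (cases n) auto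
  define N where "N = real (Suc m)"
  define H where "H = (\<lambda>k::real. (-1/N^3) * (N^2 * (1-k)^(Suc m) + (-3*N^2) * (1-k)^(Suc (Suc m))
            + (3*N*(N+1)^2/(N+2)) * (1-k)^(Suc (Suc (Suc m)))
            + (0 - (N+1)^3/(N+3)) * (1-k)^(Suc (Suc (Suc (Suc m))))))"
  have "((\<lambda>x. (1-x)^m * phi1_profile (Suc m) x ^ 3) has_integral (H 1 - H 0)) {0..1}"
    using antiderivative_weight_phi1_profile_cube[of m] unfolding H_def N_def
    by (intro fundamental_theorem_of_calculus)
       (auto intro: has_field_derivative_at_within simp: has_real_derivative_iff_has_vector_derivative[symmetric])
  moreover have "H 1 - H 0 = 2*(N - 1)/((N+2)*(N+3)*N^3)"
  proof -
    have "N > 0" unfolding N_def by simp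
    then have "N \<noteq> 0" "N + 2 \<noteq> 0" "N + 3 \<noteq> 0" by auto
    then show ?thesis unfolding H_def by (simp add: field_simps power2_eq_square power3_eq_cube)
  qed
  ultimately show ?thesis unfolding n N_def by simp
qed

lemma rescaled_integrand_decomposition:
  fixes s ls l1 q w ph b u c E :: real
  assumes "s \<noteq> 0" and u: "u = ph + b / s" and c: "c = (q-1)*(q-2)/2"
    and E: "E = nonlin q (s*u) + (q-2)*(s*u) + c*(s*u)^2"
  shows "w*ph*(ls * nonlin q (s*ph + b) + l1*(q-2)*(s*ph + b))/s^2 - (-l1*c)*(w*ph^3)
     = w*ph*(ls*(E/s^2) - (ls - l1)/s*(q-2)*u - (ls - l1)*c*u^2 - l1*c*(u^2 - ph^2))"
proof -
  define r where "r = (ls - l1) / s"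
  have ls: "ls = l1 + r * s" "ls - l1 = r * s" unfolding r_def using assms(1) by simp_all
  have v: "s*ph + b = s*u" unfolding u using assms(1) by (simp add: field_simps)
  have N: "nonlin q (s*u) = E - (q-2)*(s*u) - c*(s*u)^2" unfolding E by simp
  show ?thesis
    unfolding v N r_def[symmetric] ls(2)
    using assms(1) by (simp add: ls(1) field_simps power2_eq_square power3_eq_cube)
qed

lemma rescaled_taylor_remainder:
  fixes s \<theta> K u :: real
  assumes s: "s \<noteq> 0" "\<bar>s\<bar> \<le> \<theta>" and \<theta>: "\<theta> \<le> 1/4" and u: "\<bar>u\<bar> \<le> 2"
    and K: "0 \<le> K" "\<And>v. \<bar>v\<bar> \<le> 1/2 \<Longrightarrow> abs (nonlin q v + (q-2)* v + (q-1)*(q-2)/2* v^2) \<le> K * \<bar>v\<bar>^3"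
  shows "\<bar>(nonlin q (s*u) + (q-2)*(s*u) + (q-1)*(q-2)/2*(s*u)^2) / s^2\<bar> \<le> 8*K*\<theta>"
proof -
  have "\<bar>s*u\<bar> \<le> (1/4)*2" unfolding abs_mult using s \<theta> u by (intro mult_mono) auto
  then have "\<bar>nonlin q (s*u) + (q-2)*(s*u) + (q-1)*(q-2)/2*(s*u)^2\<bar> \<le> K * \<bar>s*u\<bar>^3" using K(2) by simp
  also have "\<dots> = K * (\<bar>s\<bar>^2 * (\<bar>s\<bar> * \<bar>u\<bar>^3))"
    by (simp add: abs_mult power_mult_distrib power2_eq_square power3_eq_cube mult_ac)
  also have "\<dots> \<le> K * (\<bar>s\<bar>^2 * (\<theta> * 2^3))"
    using K(1) s u by (intro mult_left_mono mult_mono power_mono) auto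
  finally show ?thesis using s by (simp add: abs_divide divide_le_eq mult_ac)
qed

lemma rescaled_integrand_estimate:
  fixes s ls l1 q K \<theta> w ph b :: real
  assumes s: "s \<noteq> 0" "\<bar>s\<bar> \<le> \<theta>" and \<theta>: "\<theta> \<le> 1/4"
    and K: "0 \<le> K" "\<And>v. \<bar>v\<bar> \<le> 1/2 \<Longrightarrow> abs (nonlin q v + (q-2)* v + (q-1)*(q-2)/2* v^2) \<le> K * \<bar>v\<bar>^3"
    and ls: "\<bar>(ls - l1)/s\<bar> \<le> \<theta>" and b: "\<bar>b\<bar> \<le> \<theta> * \<bar>s\<bar>"
    and l1: "0 \<le> l1" and q: "2 < q" and w: "\<bar>w\<bar> \<le> 1" and ph: "\<bar>ph\<bar> \<le> 1"
  shows "\<bar>w*ph*(ls * nonlin q (s*ph + b) + l1*(q-2)*(s*ph + b))/s^2 - (-l1*((q-1)*(q-2)/2))*(w*ph^3)\<bar>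
     \<le> \<theta>*(2*(q-2) + 2*(q-1)*(q-2) + 2*l1*(q-1)*(q-2) + 8*K*(l1+1))"
proof -
  define u where "u = ph + b / s"
  define c where "c = (q-1)*(q-2)/2"
  define E where "E = nonlin q (s*u) + (q-2)*(s*u) + c*(s*u)^2"
  have c: "c \<ge> 0" unfolding c_def using q by simp
  have s0: "\<bar>s\<bar> > 0" and \<theta>0: "\<theta> \<ge> 0" using s by auto
  have bs: "\<bar>b / s\<bar> \<le> \<theta>" using b s0 by (simp add: abs_divide divide_le_eq)
  have u: "\<bar>u\<bar> \<le> 2" using abs_triangle_ineq[of ph "b / s"] bs ph \<theta> unfolding u_def by linarith
  have "\<bar>ls - l1\<bar> = \<bar>(ls - l1)/s\<bar> * \<bar>s\<bar>" using s by (simp add: abs_divide)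
  also have "\<dots> \<le> \<theta> * (1/4)" using ls s \<theta> \<theta>0 by (intro mult_mono) auto
  finally have ls': "\<bar>ls - l1\<bar> \<le> \<theta>" using \<theta>0 by linarith
  have "\<bar>E / s^2\<bar> \<le> 8*K*\<theta>" unfolding E_def c_def by (rule rescaled_taylor_remainder[OF s \<theta> u K])
  moreover have "\<bar>ls\<bar> \<le> l1 + 1" using ls' \<theta> l1 by linarith
  ultimately have "\<bar>ls\<bar> * \<bar>E/s^2\<bar> \<le> (l1 + 1) * (8*K*\<theta>)"
    using K(1) \<theta>0 by (intro mult_mono) auto
  then have E: "\<bar>ls*(E/s^2)\<bar> \<le> \<theta>*(8*K*(l1+1))" by (simp add: abs_mult mult_ac)
  have "\<bar>(ls - l1)/s*(q-2)*u\<bar> = \<bar>(ls - l1)/s\<bar> * ((q-2)*\<bar>u\<bar>)" using q by (simp add: abs_mult)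
  also have "\<dots> \<le> \<theta>*((q-2)*2)" using ls u q \<theta>0 by (intro mult_mono mult_left_mono) auto
  finally have "\<bar>(ls - l1)/s*(q-2)*u\<bar> \<le> \<theta>*((q-2)*2)" .
  moreover have "\<bar>(ls - l1)*c*u^2\<bar> \<le> \<theta>*(c*2^2)"
  proof -
    have "\<bar>(ls - l1)*c*u^2\<bar> = \<bar>ls - l1\<bar> * (c*\<bar>u\<bar>^2)" using c by (simp add: abs_mult power_abs)
    also have "\<dots> \<le> \<theta>*(c*2^2)" using ls' u c by (intro mult_mono mult_left_mono power_mono) auto
    finally show ?thesis .
  qed
  moreover have "\<bar>l1*c*(u^2 - ph^2)\<bar> \<le> \<theta>*(3*l1*c)"
  proof -
    have "u^2 - ph^2 = b / s * (2*ph + b / s)" unfolding u_def by (simp add: power2_eq_square algebra_simps)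
    then have "\<bar>u^2 - ph^2\<bar> = \<bar>b / s\<bar> * \<bar>2*ph + b / s\<bar>" by (simp add: abs_mult)
    moreover have "\<bar>2*ph + b / s\<bar> \<le> 3" using abs_triangle_ineq[of "2*ph" "b / s"] bs ph \<theta> by simp
    ultimately have "\<bar>u^2 - ph^2\<bar> \<le> \<theta>*3" using bs \<theta>0 mult_mono[of "\<bar>b / s\<bar>" \<theta>] by simp
    then have "(l1*c) * \<bar>u^2 - ph^2\<bar> \<le> (l1*c) * (\<theta>*3)" using l1 c by (intro mult_left_mono) auto
    then show ?thesis using l1 c by (simp add: abs_mult mult_ac)
  qed
  ultimately have "\<bar>ls*(E/s^2) - (ls - l1)/s*(q-2)*u - (ls - l1)*c*u^2 - l1*c*(u^2 - ph^2)\<bar>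
      \<le> \<theta>*(8*K*(l1+1)) + \<theta>*((q-2)*2) + \<theta>*(c*2^2) + \<theta>*(3*l1*c)"
    using E by linarith
  also have "\<dots> \<le> \<theta>*(2*(q-2) + 2*(q-1)*(q-2) + 2*l1*(q-1)*(q-2) + 8*K*(l1+1))"
  proof -
    have "\<theta>*(3*l1*c) \<le> \<theta>*(4*l1*c)" using \<theta>0 l1 c by (intro mult_left_mono) auto
    moreover have "\<theta>*(c*2^2) = \<theta>*(2*(q-1)*(q-2))" "\<theta>*(4*l1*c) = \<theta>*(2*l1*(q-1)*(q-2))"
      unfolding c_def by simp_all
    ultimately show ?thesis by (simp add: algebra_simps)
  qed
  finally have bound: "\<bar>ls*(E/s^2) - (ls - l1)/s*(q-2)*u - (ls - l1)*c*u^2 - l1*c*(u^2 - ph^2)\<bar>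
      \<le> \<theta>*(2*(q-2) + 2*(q-1)*(q-2) + 2*l1*(q-1)*(q-2) + 8*K*(l1+1))" .
  have "\<bar>w*ph\<bar> \<le> 1" using w ph by (simp add: abs_mult mult_le_one)
  then have "\<bar>w*ph*(ls*(E/s^2) - (ls - l1)/s*(q-2)*u - (ls - l1)*c*u^2 - l1*c*(u^2 - ph^2))\<bar>
      \<le> \<bar>ls*(E/s^2) - (ls - l1)/s*(q-2)*u - (ls - l1)*c*u^2 - l1*c*(u^2 - ph^2)\<bar>"
    by (simp add: abs_mult mult_left_le_one_le)
  with bound show ?thesis
    unfolding c_def[symmetric] rescaled_integrand_decomposition[OF s(1) u_def c_def E_def] by linarith
qed

lemma rescaled_moment_integral_bound:
  fixes n :: nat and q K \<theta> s ls l1 :: real and b :: "real \<Rightarrow> real"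
  assumes n: "n \<ge> 1" and q: "2 < q" and l1: "0 \<le> l1" "4*(real n + 1) = l1*(q-2)"
    and K: "0 \<le> K" "\<And>v. \<bar>v\<bar> \<le> 1/2 \<Longrightarrow> abs (nonlin q v + (q-2)* v + (q-1)*(q-2)/2* v^2) \<le> K * \<bar>v\<bar>^3"
    and s: "s \<noteq> 0" "\<bar>s\<bar> \<le> \<theta>" and \<theta>: "\<theta> \<le> 1/4" and ls: "\<bar>(ls - l1) / s\<bar> \<le> \<theta>"
    and b: "\<And>k. k \<in> {0..1} \<Longrightarrow> \<bar>b k\<bar> \<le> \<theta> * \<bar>s\<bar>"
    and identity: "((\<lambda>k. moment_integrand n q ls (s * phi1_profile n k + b k) k) has_integral 0) {0..1}"
  shows "\<bar>l1*((q-1)*(q-2)/2) * (2*(real n - 1) / ((real n + 2)*(real n + 3)*(real n)^3))\<bar>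
           \<le> \<theta> * (2*(q-2) + 2*(q-1)*(q-2) + 2*l1*(q-1)*(q-2) + 8*K*(l1+1))"
proof -
  define c0 where "c0 = -l1*((q-1)*(q-2)/2)"
  define I where "I = c0 * (2*(real n - 1) / ((real n + 2)*(real n + 3)*(real n)^3))"
  define T where "T = (\<lambda>k::real. c0 * ((1 - k)^(n-1) * phi1_profile n k ^ 3))"
  have "(T has_integral I) {0..1}"
    unfolding T_def I_def using integral_weight_phi1_profile_cube[OF n] by (rule has_integral_mult_right)
  with has_integral_divide[OF identity, of "s^2"]
  have "((\<lambda>k. moment_integrand n q ls (s * phi1_profile n k + b k) k / s^2 - T k) has_integral (0 - I)) (cbox 0 1)"
    unfolding cbox_interval by (intro has_integral_diff) auto
  moreover have "norm (moment_integrand n q ls (s * phi1_profile n k + b k) k / s^2 - T k)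
      \<le> \<theta> * (2*(q-2) + 2*(q-1)*(q-2) + 2*l1*(q-1)*(q-2) + 8*K*(l1+1))"
    if "k \<in> cbox 0 1" for k
  proof -
    have k: "0 \<le> k" "k \<le> 1" "k \<in> {0..1}" using that by auto
    have "\<bar>(1 - k)^(n-1)\<bar> \<le> 1" using k by (simp add: power_le_one)
    then have "\<bar>(1 - k)^(n-1) * phi1_profile n k * (ls * nonlin q (s * phi1_profile n k + b k)
          + l1*(q-2) * (s * phi1_profile n k + b k)) / s^2
        - (-l1*((q-1)*(q-2)/2)) * ((1 - k)^(n-1) * phi1_profile n k ^ 3)\<bar>
        \<le> \<theta> * (2*(q-2) + 2*(q-1)*(q-2) + 2*l1*(q-1)*(q-2) + 8*K*(l1+1))"
      using abs_phi1_profile_le_1[of n k] n k l1(1) q ls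
      by (intro rescaled_integrand_estimate[OF s \<theta> K]) (use k b in auto)
    then show ?thesis unfolding moment_integrand_def T_def c0_def real_norm_def l1(2) .
  qed
  ultimately have "norm (0 - I) \<le> \<theta> * (2*(q-2) + 2*(q-1)*(q-2) + 2*l1*(q-1)*(q-2) + 8*K*(l1+1))
      * measure lborel (cbox (0::real) 1)"
    using s K(1) l1(1) q by (intro has_integral_bound) auto
  then show ?thesis unfolding I_def c0_def by simp
qed

lemma integral_identity_excludes_small_branch:
  fixes n :: nat and q :: real
  assumes n: "n \<ge> 2" and q: "2 < q"
  obtains \<theta> where "0 < \<theta>"
    and "\<And>s ls b. s \<noteq> 0 \<Longrightarrow> \<bar>s\<bar> \<le> \<theta> \<Longrightarrow> \<bar>(ls - 4*(real n + 1)/(q - 2)) / s\<bar> \<le> \<theta> \<Longrightarrow>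
           (\<And>k. k \<in> {0..1} \<Longrightarrow> \<bar>b k\<bar> \<le> \<theta> * \<bar>s\<bar>) \<Longrightarrow>
           \<not> ((\<lambda>k. moment_integrand n q ls (s * phi1_profile n k + b k) k) has_integral 0) {0..1}"
proof -
  define l1 where "l1 = 4*(real n + 1)/(q - 2)"
  have l1: "0 < l1" "4*(real n + 1) = l1*(q-2)" unfolding l1_def using q by auto
  obtain K where K: "0 \<le> K" "\<And>v. \<bar>v\<bar> \<le> 1/2 \<Longrightarrow> abs (nonlin q v + (q-2)* v + (q-1)*(q-2)/2* v^2) \<le> K * \<bar>v\<bar>^3"
    using nonlin_taylor_bound[of q] by blast
  define C where "C = 2*(q-2) + 2*(q-1)*(q-2) + 2*l1*(q-1)*(q-2) + 8*K*(l1+1)"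
  define I where "I = \<bar>l1*((q-1)*(q-2)/2) * (2*(real n - 1) / ((real n + 2)*(real n + 3)*(real n)^3))\<bar>"
  have "0 < I" unfolding I_def using l1 q n by simp
  have "0 \<le> C" unfolding C_def using l1 q K by (intro add_nonneg_nonneg mult_nonneg_nonneg) auto
  define \<theta> where "\<theta> = min (1/4) (I / (2*(C+1)))"
  have \<theta>: "0 < \<theta>" "\<theta> \<le> 1/4"
    unfolding \<theta>_def using \<open>0 < I\<close> \<open>0 \<le> C\<close> by (simp, simp only: min.cobounded1)
  have "\<theta> * C \<le> I / (2*(C+1)) * C" unfolding \<theta>_def using \<open>0 \<le> C\<close> by (intro mult_right_mono) auto
  also have "\<dots> < I" using \<open>0 < I\<close> \<open>0 \<le> C\<close> by (simp add: field_simps add_nonneg_pos)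
  finally have "\<theta> * C < I" .
  show thesis
  proof (rule that[OF \<theta>(1)], rule notI)
    fix s ls :: real and b :: "real \<Rightarrow> real"
    assume s: "s \<noteq> 0" "\<bar>s\<bar> \<le> \<theta>" and "\<bar>(ls - 4*(real n + 1)/(q - 2)) / s\<bar> \<le> \<theta>"
      and "\<And>k. k \<in> {0..1} \<Longrightarrow> \<bar>b k\<bar> \<le> \<theta> * \<bar>s\<bar>"
      and "((\<lambda>k. moment_integrand n q ls (s * phi1_profile n k + b k) k) has_integral 0) {0..1}"
    then have "I \<le> \<theta> * C"
      unfolding I_def C_def l1_def[symmetric] using n q l1 K
      by (intro rescaled_moment_integral_bound[OF _ q _ l1(2) K s \<theta>(2)]) auto
    with \<open>\<theta> * C < I\<close> show False by simp
  qed
qed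

lemma small_parameter_exists:
  fixes lam N :: "real \<Rightarrow> real"
  assumes "(lam has_real_derivative 0) (at 0)" and "((\<lambda>s. N s / \<bar>s\<bar>) \<longlongrightarrow> 0) (at 0)"
    and "0 < \<delta>" "0 < \<theta>"
  obtains s where "s \<noteq> 0" "\<bar>s\<bar> < \<delta>" "\<bar>s\<bar> \<le> \<theta>" "\<bar>(lam s - lam 0) / s\<bar> \<le> \<theta>" "N s \<le> \<theta> * \<bar>s\<bar>"
proof -
  have quotient: "((\<lambda>s. (lam s - lam 0) / s) \<longlongrightarrow> 0) (at 0)" using assms(1) unfolding DERIV_def by simp
  have "\<forall>\<^sub>F s in at 0. s \<noteq> 0" by (simp add: eventually_at_filter)
  moreover have "\<forall>\<^sub>F s in at 0. \<bar>s\<bar> < min \<delta> \<theta>"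
    using tendstoD[OF tendsto_ident_at[of "0::real" UNIV], of "min \<delta> \<theta>"] assms(3,4) by (simp add: dist_real_def)
  moreover have "\<forall>\<^sub>F s in at 0. \<bar>(lam s - lam 0) / s\<bar> < \<theta>"
    using tendstoD[OF quotient assms(4)] by (simp add: dist_real_def)
  moreover have "\<forall>\<^sub>F s in at 0. \<bar>N s / \<bar>s\<bar>\<bar> < \<theta>"
    using tendstoD[OF assms(2,4)] by (simp add: dist_real_def)
  ultimately have "\<forall>\<^sub>F s in at 0. s \<noteq> 0 \<and> \<bar>s\<bar> < min \<delta> \<theta> \<and> \<bar>(lam s - lam 0) / s\<bar> < \<theta> \<and> \<bar>N s / \<bar>s\<bar>\<bar> < \<theta>"
    by (intro eventually_conj)
  then obtain s where s: "s \<noteq> 0" "\<bar>s\<bar> < min \<delta> \<theta>" "\<bar>(lam s - lam 0) / s\<bar> < \<theta>" "\<bar>N s / \<bar>s\<bar>\<bar> < \<theta>"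
    using eventually_happens'[OF trivial_limit_at] by blast
  then have "N s \<le> \<theta> * \<bar>s\<bar>" by (simp add: field_simps)
  with s show thesis using that by auto
qed

theorem lemma6p1:
  fixes n :: nat and q \<alpha> \<delta> :: real and i0 :: "'k::finite"
    and w \<beta> :: "real \<Rightarrow> complex^'k \<Rightarrow> real" and lam :: "real \<Rightarrow> real"
    and M :: "(complex^'k \<Rightarrow> real) set"
  assumes "CARD('k) = n + 1" and "n \<ge> 2"
    and "2 < q" and "q < 2 * real n / (real n - 1)"
    and "0 < \<alpha>" and "\<alpha> < 1" and "0 < \<delta>"
    and sol: "\<forall>s\<in>{-\<delta><..<\<delta>}. w s \<in> C2a \<alpha> \<inter> XI i0 \<and> lam s \<ge> 0 \<and>
                 (\<forall>x\<in>sphere 0 1. S_op q (w s) (lam s) x = 0)"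
    and nontriv: "\<forall>s\<in>{-\<delta><..<\<delta>}. s \<noteq> 0 \<longrightarrow> (\<exists>x\<in>sphere 0 1. w s x \<noteq> 0)"
    and diff: "\<forall>s\<in>{-\<delta><..<\<delta>}. lam differentiable (at s) \<and> hdiff \<alpha> i0 w s"
    and decomp: "\<forall>s\<in>{-\<delta><..<\<delta>}. \<forall>x\<in>sphere 0 1. w s x = s * phi1 n i0 x + \<beta> s x"
    and compl: "is_complement \<alpha> i0 M (phi1 n i0)" and "\<forall>s\<in>{-\<delta><..<\<delta>}. \<beta> s \<in> M"
    and "lam 0 = 4 * (real n + 1) / (q - 2)"
    and "\<forall>x\<in>sphere 0 1. \<beta> 0 x = 0"
    and "((\<lambda>s. hnorm \<alpha> (\<beta> s) / \<bar>s\<bar>) \<longlongrightarrow> 0) (at 0)"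
  shows "deriv lam 0 \<noteq> 0"
proof
  assume "deriv lam 0 = 0"
  moreover have "lam differentiable (at 0)" using diff \<open>0 < \<delta>\<close> by force
  ultimately have "(lam has_real_derivative 0) (at 0)" by (metis DERIV_deriv_iff_real_differentiable)
  obtain \<theta> where "0 < \<theta>" and no_small_branch: "\<And>s ls b. s \<noteq> 0 \<Longrightarrow> \<bar>s\<bar> \<le> \<theta> \<Longrightarrow>
      \<bar>(ls - 4*(real n + 1)/(q - 2)) / s\<bar> \<le> \<theta> \<Longrightarrow> (\<And>k. k \<in> {0..1} \<Longrightarrow> \<bar>b k\<bar> \<le> \<theta> * \<bar>s\<bar>) \<Longrightarrow>
      \<not> ((\<lambda>k. moment_integrand n q ls (s * phi1_profile n k + b k) k) has_integral 0) {0..1}"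
    using integral_identity_excludes_small_branch[OF \<open>n \<ge> 2\<close> \<open>2 < q\<close>] by blast
  obtain s where s: "s \<noteq> 0" "\<bar>s\<bar> < \<delta>" "\<bar>s\<bar> \<le> \<theta>" "\<bar>(lam s - lam 0) / s\<bar> \<le> \<theta>"
      "hnorm \<alpha> (\<beta> s) \<le> \<theta> * \<bar>s\<bar>"
    by (rule small_parameter_exists[OF \<open>(lam has_real_derivative 0) (at 0)\<close>
          \<open>((\<lambda>s. hnorm \<alpha> (\<beta> s) / \<bar>s\<bar>) \<longlongrightarrow> 0) (at 0)\<close> \<open>0 < \<delta>\<close> \<open>0 < \<theta>\<close>])
  then have s_in: "s \<in> {-\<delta><..<\<delta>}" by auto
  have "CARD('k) \<ge> 2" using \<open>CARD('k) = n + 1\<close> \<open>n \<ge> 2\<close> by simp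
  then obtain j where "j \<noteq> i0" by (rule exists_other_index)
  then have ij: "i0 \<noteq> j" by simp
  have "w s \<in> C2a \<alpha>" "w s \<in> XI i0" "\<forall>x\<in>sphere 0 1. S_op q (w s) (lam s) x = 0"
    and "\<forall>x\<in>sphere 0 1. w s x = s * phi1 n i0 x + \<beta> s x"
    using sol decomp s_in by auto
  from decomposed_integral_identity[OF ij \<open>CARD('k) = n + 1\<close> \<open>n \<ge> 2\<close> this]
  have identity: "((\<lambda>k. moment_integrand n q (lam s) (s * phi1_profile n k + \<beta> s (profile_pt i0 j k)) k)
      has_integral 0) {0..1}" .
  have \<beta>_small: "\<bar>\<beta> s (profile_pt i0 j k)\<bar> \<le> \<theta> * \<bar>s\<bar>" if "k \<in> {0..1}" for k
  proof -
    have "\<beta> s \<in> C2a \<alpha>" using compl \<open>\<forall>s\<in>{-\<delta><..<\<delta>}. \<beta> s \<in> M\<close> s_in unfolding is_complement_def by blast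
    moreover have "norm (profile_pt i0 j k) = 1" using norm_profile_pt[OF ij] that by simp
    ultimately have "\<bar>\<beta> s (profile_pt i0 j k)\<bar> \<le> hnorm \<alpha> (\<beta> s)" by (rule abs_le_hnorm)
    with s(5) show ?thesis by linarith
  qed
  have "\<bar>(lam s - 4*(real n + 1)/(q - 2)) / s\<bar> \<le> \<theta>"
    using s(4) \<open>lam 0 = 4 * (real n + 1) / (q - 2)\<close> by simp
  from no_small_branch[OF s(1,3) this \<beta>_small] identity show False by simp
qed

end
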